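(* Let $n\ge 3$, let $m_1,m_2$ be positive integers with $m_1\mid m_2$, and let $F,R$ be as in the context. In $F/[R,F]$ the order of each of the following elements divides the stated number: (1) for $1\le i\le n-1$: $[s_i(1),s_i(x)]$ — $m_1$; (2) for $1\le i<j-1\le n-2$: $[s_i(1),s_j(1)]$ — $m_2$; $[s_i(x),s_j(x)][s_i(1),s_j(1)]^{-1}$ — $m_1$; $[s_i(x),s_j(1)][s_i(x),s_j(x)]^{-1}$ — $m_1$; $[s_i(1),s_j(x)][s_i(x),s_j(x)]^{-1}$ — $m_1$; (3) for $1\le i\le n-2$: $[s_i(1),s_{i+1}(x)][s_i(x),s_{i+1}(1)]^{-1}$ — $m_1$; $[s_i(x),s_{i+1}(x)][s_i(x),s_{i+1}(1)]^{-1}$ — $m_1$; (4) for $1\le i\le n-2$: $[s_i(1),s_{i+1}(1),s_i(1)]$ — $m_2$; $[s_i(1),s_{i+1}(1),s_{i+1}(1)s_i(1)^{-1}]$ — $\gcd(m_2,\binom{m_2}{2})$; $[s_i(1),s_{i+1}(1),s_i(x)s_i(1)^{-1}]$ — $m_1$; $[s_i(1),s_{i+1}(1),s_i(x)s_{i+1}(x)^{-1}(s_i(1)s_{i+1}(1)^{-1})^{-1}]$ — $\gcd(m_1,\binom{m_1}{2})$; (5) for $1\le i\le n-3$: $[s_i(1),s_{i+1}(1),s_{i+2}(1),s_{i+1}(1)]$ — $\gcd(2,m_2)$; $[s_i(1),s_{i+1}(1),s_{i+2}(1),s_{i+1}(x)s_{i+1}(1)^{-1}]$ — $\gcd(2,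m_1)$.
   Context: Commutator conventions: $[a,b]=a^{-1}b^{-1}ab$, $a^b=b^{-1}ab$, commutators left-normed: $[a_1,\dots,a_k]=[[a_1,\dots,a_{k-1}],a_k]$. Let $F$ be the free group on the $2(n-1)$ symbols $s_i(1),s_i(x)$, $1\le i\le n-1$. Write $s_i(1|x)$ for either of $s_i(1),s_i(x)$ (every choice is included). Let $R$ be the normal closure in $F$ of: $s_i(1)^{m_1}s_i(x)^{-m_1}$ and $s_i(x)^{m_2}$ ($1\le i\le n-1$); $[s_i(1),s_i(x)]$ ($1\le i\le n-1$); $[s_i(1|x),s_j(1|x)]$ ($1\le i<j-1\le n-2$); $[s_i(1|x)^{-1},s_{i+1}(x)^{-1}][s_i(x),s_{i+1}(1)]^{-1}$ ($1\le i\le n-2$); $[s_i(1|x),s_{i+1}(1),s_i(1)]$ and $[s_i(1|x),s_{i+1}(1),s_{i+1}(1)]$ ($1\le i\le n-2$); $[[s_i(1|x),s_{i+1}(1)],[s_{i+1}(1|x),s_{i+2}(1)]]$ ($1\le i\le n-3$). It is known that $F/R\cong\mathrm{UT}_n(\mathbb Z/m_1\mathbb Z\times\mathbb Z/m_2\mathbb Z)$ via $s_i(\lambda)\mapsto I+\lambda E_{i,i+1}$, where $1=(1,1)$ and $x=(0,1)$. *)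

theory Defs
  imports "HOL-Algebra.Algebra"
begin

text \<open>A letter is a pair (g, e) with g a generator and e = True meaning the inverse g^-1.\<close>

type_synonym 'g fword = "('g \<times> bool) list"

fun fred :: "'g fword \<Rightarrow> 'g fword" where
  "fred [] = []"
| "fred (x # xs) =
     (case fred xs of
        [] \<Rightarrow> [x]
      | y # ys \<Rightarrow> (if fst y = fst x \<and> snd y \<noteq> snd x then ys else x # y # ys))"

definition free_grp :: "'g set \<Rightarrow> 'g fword monoid" where
  "free_grp S = \<lparr> carrier = {w. fst ` set w \<subseteq> S \<and> fred w = w},
                  monoid.mult = (\<lambda>u v. fred (u @ v)),
                  one = [] \<rparr>"

definition fgen :: "'g \<Rightarrow> 'g fword" where
  "fgen g = [(g, False)]"

definition gcomm :: "('a, 'b) monoid_scheme \<Rightarrow> 'a \<Rightarrow> 'a \<Rightarrow> 'a" where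
  "gcomm G a b = inv\<^bsub>G\<^esub> a \<otimes>\<^bsub>G\<^esub> inv\<^bsub>G\<^esub> b \<otimes>\<^bsub>G\<^esub> a \<otimes>\<^bsub>G\<^esub> b"

definition gcomm3 :: "('a, 'b) monoid_scheme \<Rightarrow> 'a \<Rightarrow> 'a \<Rightarrow> 'a \<Rightarrow> 'a" where
  "gcomm3 G a b c = gcomm G (gcomm G a b) c"

definition gcomm4 :: "('a, 'b) monoid_scheme \<Rightarrow> 'a \<Rightarrow> 'a \<Rightarrow> 'a \<Rightarrow> 'a \<Rightarrow> 'a" where
  "gcomm4 G a b c d = gcomm G (gcomm3 G a b c) d"

text \<open>Generators: (i, False) is s_i(1), (i, True) is s_i(x), for 1 \<le> i \<le> n-1.\<close>

definition gens :: "nat \<Rightarrow> (nat \<times> bool) set" where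
  "gens n = {1..n-1} \<times> UNIV"

definition FF :: "nat \<Rightarrow> (nat \<times> bool) fword monoid" where
  "FF n = free_grp (gens n)"

definition sg :: "nat \<Rightarrow> bool \<Rightarrow> (nat \<times> bool) fword" where
  "sg i b = fgen (i, b)"

abbreviation s1 :: "nat \<Rightarrow> (nat \<times> bool) fword" where "s1 i \<equiv> sg i False"
abbreviation sx :: "nat \<Rightarrow> (nat \<times> bool) fword" where "sx i \<equiv> sg i True"

definition relators :: "nat \<Rightarrow> nat \<Rightarrow> nat \<Rightarrow> (nat \<times> bool) fword set" where
  "relators n m1 m2 = (
      {s1 i [^]\<^bsub>FF n\<^esub> m1 \<otimes>\<^bsub>FF n\<^esub> inv\<^bsub>FF n\<^esub> (sx i [^]\<^bsub>FF n\<^esub> m1) | i. 1 \<le> i \<and> i \<le> n - 1}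
    \<union> {sx i [^]\<^bsub>FF n\<^esub> m2 | i. 1 \<le> i \<and> i \<le> n - 1}
    \<union> {gcomm (FF n) (s1 i) (sx i) | i. 1 \<le> i \<and> i \<le> n - 1}
    \<union> {gcomm (FF n) (sg i a) (sg j b) | i j a b. 1 \<le> i \<and> i + 1 < j \<and> j \<le> n - 1}
    \<union> {gcomm (FF n) (inv\<^bsub>FF n\<^esub> (sg i a)) (inv\<^bsub>FF n\<^esub> (sx (i+1))) \<otimes>\<^bsub>FF n\<^esub>
          inv\<^bsub>FF n\<^esub> (gcomm (FF n) (sx i) (s1 (i+1))) | i a. 1 \<le> i \<and> i \<le> n - 2}
    \<union> {gcomm3 (FF n) (sg i a) (s1 (i+1)) (s1 i) | i a. 1 \<le> i \<and> i \<le> n - 2}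
    \<union> {gcomm3 (FF n) (sg i a) (s1 (i+1)) (s1 (i+1)) | i a. 1 \<le> i \<and> i \<le> n - 2}
    \<union> {gcomm (FF n) (gcomm (FF n) (sg i a) (s1 (i+1))) (gcomm (FF n) (sg (i+1) b) (s1 (i+2)))
          | i a b. 1 \<le> i \<and> i \<le> n - 3})"

definition normal_closure :: "('a, 'b) monoid_scheme \<Rightarrow> 'a set \<Rightarrow> 'a set" where
  "normal_closure G Y =
     generate G (\<Union>x \<in> Y. \<Union>y \<in> carrier G. {inv\<^bsub>G\<^esub> y \<otimes>\<^bsub>G\<^esub> x \<otimes>\<^bsub>G\<^esub> y})"

definition RR :: "nat \<Rightarrow> nat \<Rightarrow> nat \<Rightarrow> (nat \<times> bool) fword set" where
  "RR n m1 m2 = normal_closure (FF n) (relators n m1 m2)"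

definition RF :: "nat \<Rightarrow> nat \<Rightarrow> nat \<Rightarrow> (nat \<times> bool) fword set" where
  "RF n m1 m2 = generate (FF n)
     {gcomm (FF n) r f | r f. r \<in> RR n m1 m2 \<and> f \<in> carrier (FF n)}"

definition qord :: "nat \<Rightarrow> nat \<Rightarrow> nat \<Rightarrow> (nat \<times> bool) fword \<Rightarrow> nat" where
  "qord n m1 m2 w = group.ord (FF n Mod RF n m1 m2) (RF n m1 m2 #>\<^bsub>FF n\<^esub> w)"

end

theory Submission
  imports Defs
begin

(* Modulo [R,F] every relator of the presentation becomes central, so it suffices to argue in a
   group in which the images of the relators are central.  Consequences of the relators that hold
   modulo the centre are derived as exact identities in the central quotient, by commutator
   calculus and the Hall--Witt identity.  Back in the group, central commutators are bilinear, and
   the expansions [x, y^k] = [x,y]^k [[x,y],y]^(k choose 2) together with the power relators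
   s_i(1)^m1 \<equiv> s_i(x)^m1 and s_i(x)^m2 \<equiv> 1 bound the orders; the binomial coefficients in the
   statement come from these expansions, and the factor 2 in part (5) from commutators that are
   their own inverses by the Hall--Witt identity. *)

section \<open>Free groups\<close>

definition fred_step :: "'g \<times> bool \<Rightarrow> 'g fword \<Rightarrow> 'g fword" where
  "fred_step x r = (case r of [] \<Rightarrow> [x]
     | y # ys \<Rightarrow> (if fst y = fst x \<and> snd y \<noteq> snd x then ys else x # y # ys))"

definition letter_inv :: "'g \<times> bool \<Rightarrow> 'g \<times> bool" where
  "letter_inv x = (fst x, \<not> snd x)"

lemma fred_Cons: "fred (x # xs) = fred_step x (fred xs)"
  by (auto simp: fred_step_def)

declare fred.simps(2)[simp del]

lemma fred_append: "fred (u @ v) = foldr fred_step u (fred v)"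
  by (induction u) (simp_all add: fred_Cons)

lemma length_fred_le: "length (fred w) \<le> length w"
  by (induction w) (auto simp: fred_Cons fred_step_def split: list.splits)

lemma set_fred_subset: "set (fred w) \<subseteq> set w"
  by (induction w) (auto simp: fred_step_def fred_Cons split: list.splits if_splits)

lemma fred_tl_reduced: "fred (y # ys) = y # ys \<Longrightarrow> fred ys = ys"
proof (cases "fred ys")
  case Nil
  assume "fred (y # ys) = y # ys"
  then show ?thesis using Nil by (auto simp: fred_Cons fred_step_def)
next
  case (Cons z zs)
  assume reduced: "fred (y # ys) = y # ys"
  show ?thesis
  proof (cases "fst z = fst y \<and> snd z \<noteq> snd y")
    case True
    then have "zs = y # ys" using reduced Cons by (auto simp: fred_Cons fred_step_def)
    then show ?thesis using length_fred_le[of ys] Cons by simp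
  next
    case False
    then show ?thesis using reduced Cons by (auto simp: fred_Cons fred_step_def)
  qed
qed

lemma fred_idem: "fred (fred w) = fred w"
proof (induction w)
  case Nil
  then show ?case by simp
next
  case (Cons x w)
  show ?case
  proof (cases "fred w")
    case Nil
    then show ?thesis by (auto simp: fred_Cons fred_step_def)
  next
    case (Cons y ys)
    have reduced: "fred (y # ys) = y # ys" using Cons.IH Cons by simp
    then have "fred ys = ys" by (rule fred_tl_reduced)
    then show ?thesis using Cons reduced by (auto simp: fred_Cons fred_step_def)
  qed
qed

lemma fred_step_cancel:
  assumes "fred t = t" "fst y = fst x" "snd y \<noteq> snd x"
  shows "fred_step x (fred_step y t) = t"
proof (cases t)
  case Nil
  then show ?thesis using assms by (auto simp: fred_step_def)
next
  case (Cons z zs)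
  show ?thesis
  proof (cases "fst z = fst y \<and> snd z \<noteq> snd y")
    case True
    then have zx: "z = x" using assms by (cases z, cases x, cases y) auto
    have reduced: "fred (z # zs) = z # zs" using assms Cons by simp
    then have "fred zs = zs" by (rule fred_tl_reduced)
    have "fred_step x zs = x # zs"
    proof (cases zs)
      case Nil
      then show ?thesis by (auto simp: fred_step_def)
    next
      case (Cons w ws)
      have "\<not> (fst w = fst x \<and> snd w \<noteq> snd x)"
        using reduced \<open>fred zs = zs\<close> Cons zx by (auto simp: fred_Cons fred_step_def split: if_splits)
      then show ?thesis using Cons by (auto simp: fred_step_def)
    qed
    then show ?thesis using True Cons zx by (auto simp: fred_step_def)
  next
    case False
    then show ?thesis using Cons assms by (auto simp: fred_step_def)
  qed
qed

lemma foldr_fred_step_fred: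
  assumes "fred r = r"
  shows "foldr fred_step u r = foldr fred_step (fred u) r"
proof (induction u)
  case Nil
  then show ?case by simp
next
  case (Cons x u)
  have step: "foldr fred_step (fred_step x s) r = fred_step x (foldr fred_step s r)" if "fred s = s" for s
  proof (cases s)
    case Nil
    then show ?thesis by (auto simp: fred_step_def)
  next
    case (Cons y ys)
    show ?thesis
    proof (cases "fst y = fst x \<and> snd y \<noteq> snd x")
      case True
      have "fred ys = ys" using that Cons fred_tl_reduced by blast
      then have "fred (foldr fred_step ys r) = foldr fred_step ys r"
        using assms by (metis fred_append fred_idem)
      then have "fred_step x (fred_step y (foldr fred_step ys r)) = foldr fred_step ys r"
        using True fred_step_cancel by metis
      then show ?thesis using True Cons by (auto simp: fred_step_def)
    next
      case False
      then show ?thesis using Cons by (auto simp: fred_step_def)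
    qed
  qed
  show ?case using Cons step[of "fred u"] by (simp add: fred_Cons fred_idem)
qed

lemma fred_append_fred_left: "fred (fred u @ v) = fred (u @ v)"
  by (simp add: fred_append foldr_fred_step_fred[OF fred_idem, symmetric])

lemma fred_append_fred_right: "fred (u @ fred v) = fred (u @ v)"
  by (simp add: fred_append fred_idem)

lemma fred_cancel_letter: "fred (u @ [x, letter_inv x] @ v) = fred (u @ v)"
proof -
  have "fred ([x, letter_inv x] @ v) = fred v"
    using fred_step_cancel[OF fred_idem, of "letter_inv x" x v]
    by (simp add: fred_Cons letter_inv_def fred_step_def)
  then show ?thesis by (metis fred_append_fred_right)
qed

lemma fred_cancel_word: "fred (u @ w @ rev (map letter_inv w) @ v) = fred (u @ v)"
proof (induction w arbitrary: u v)
  case Nil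
  then show ?case by simp
next
  case (Cons x w)
  have "fred (u @ (x # w) @ rev (map letter_inv (x # w)) @ v)
      = fred ((u @ [x]) @ w @ rev (map letter_inv w) @ ([letter_inv x] @ v))" by simp
  also have "\<dots> = fred ((u @ [x]) @ [letter_inv x] @ v)"
    using Cons.IH[of "u @ [x]" "[letter_inv x] @ v"] by simp
  also have "\<dots> = fred (u @ v)" using fred_cancel_letter[of u x v] by simp
  finally show ?case .
qed

lemma group_free_grp: "group (free_grp S)"
proof (rule groupI)
  fix x y assume "x \<in> carrier (free_grp S)" "y \<in> carrier (free_grp S)"
  then show "x \<otimes>\<^bsub>free_grp S\<^esub> y \<in> carrier (free_grp S)"
    using set_fred_subset[of "x @ y"] by (force simp: free_grp_def fred_idem)
next
  show "\<one>\<^bsub>free_grp S\<^esub> \<in> carrier (free_grp S)" by (simp add: free_grp_def)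
next
  fix x y z
  assume "x \<in> carrier (free_grp S)" "y \<in> carrier (free_grp S)" "z \<in> carrier (free_grp S)"
  then show "x \<otimes>\<^bsub>free_grp S\<^esub> y \<otimes>\<^bsub>free_grp S\<^esub> z = x \<otimes>\<^bsub>free_grp S\<^esub> (y \<otimes>\<^bsub>free_grp S\<^esub> z)"
    by (simp add: free_grp_def fred_append_fred_left fred_append_fred_right)
next
  fix x assume "x \<in> carrier (free_grp S)"
  then show "\<one>\<^bsub>free_grp S\<^esub> \<otimes>\<^bsub>free_grp S\<^esub> x = x" by (simp add: free_grp_def)
next
  fix x assume x: "x \<in> carrier (free_grp S)"
  let ?y = "fred (rev (map letter_inv x))"
  have "fred (?y @ x) = []"
    using fred_cancel_word[of "[]" "rev (map letter_inv x)" "[]"]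
      fred_append_fred_left[of "map letter_inv (rev x)" x]
    by (simp add: rev_map letter_inv_def o_def)
  moreover have "?y \<in> carrier (free_grp S)"
    using x set_fred_subset[of "rev (map letter_inv x)"]
    by (force simp: free_grp_def fred_idem letter_inv_def)
  ultimately show "\<exists>y\<in>carrier (free_grp S). y \<otimes>\<^bsub>free_grp S\<^esub> x = \<one>\<^bsub>free_grp S\<^esub>"
    by (auto simp: free_grp_def)
qed

lemma group_FF: "group (FF n)"
  by (simp add: FF_def group_free_grp)

lemma sg_in_carrier: "1 \<le> i \<Longrightarrow> i \<le> n - 1 \<Longrightarrow> sg i b \<in> carrier (FF n)"
  by (simp add: FF_def free_grp_def sg_def fgen_def gens_def fred_Cons fred_step_def)

section \<open>Commutators and the centre\<close>

definition center :: "('a, 'b) monoid_scheme \<Rightarrow> 'a set" where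
  "center G = {z \<in> carrier G. \<forall>x \<in> carrier G. z \<otimes>\<^bsub>G\<^esub> x = x \<otimes>\<^bsub>G\<^esub> z}"

context group
begin

lemma mult_inv_cancel_left: "x \<in> carrier G \<Longrightarrow> y \<in> carrier G \<Longrightarrow> x \<otimes> (inv x \<otimes> y) = y"
  by (simp add: m_assoc[symmetric])

lemma inv_mult_cancel_left: "x \<in> carrier G \<Longrightarrow> y \<in> carrier G \<Longrightarrow> inv x \<otimes> (x \<otimes> y) = y"
  by (simp add: m_assoc[symmetric])

lemmas assoc_cancel_simps = m_assoc inv_mult_group mult_inv_cancel_left inv_mult_cancel_left

lemma mult_inv_eq_one_iff: "x \<in> carrier G \<Longrightarrow> y \<in> carrier G \<Longrightarrow> x \<otimes> inv y = \<one> \<longleftrightarrow> x = y"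
  by (metis inv_equality inv_inv inv_closed r_inv l_cancel m_closed)

lemma conj_eq_one_imp: "inv g \<otimes> x \<otimes> g = \<one> \<Longrightarrow> x \<in> carrier G \<Longrightarrow> g \<in> carrier G \<Longrightarrow> x = \<one>"
proof -
  assume conj: "inv g \<otimes> x \<otimes> g = \<one>" and x: "x \<in> carrier G" and g: "g \<in> carrier G"
  have "x = g \<otimes> (inv g \<otimes> x \<otimes> g) \<otimes> inv g" using x g by (simp add: assoc_cancel_simps)
  then show ?thesis using conj g by simp
qed

lemma conj_nat_pow:
  "x \<in> carrier G \<Longrightarrow> g \<in> carrier G \<Longrightarrow> inv g \<otimes> x [^] (k::nat) \<otimes> g = (inv g \<otimes> x \<otimes> g) [^] k"
proof (induction k)
  case 0
  then show ?case by simp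
next
  case (Suc k)
  have "inv g \<otimes> x [^] Suc k \<otimes> g = (inv g \<otimes> x [^] k \<otimes> g) \<otimes> (inv g \<otimes> x \<otimes> g)"
    using Suc.prems by (simp add: assoc_cancel_simps)
  then show ?case using Suc by simp
qed

lemma nat_pow_two_eq_one: "x \<in> carrier G \<Longrightarrow> x = inv x \<Longrightarrow> x [^] (2::nat) = \<one>"
  by (metis numeral_2_eq_2 nat_pow_Suc nat_pow_0 l_one r_inv)

lemma nat_pow_gcd_eq_one:
  "x \<in> carrier G \<Longrightarrow> x [^] (a::nat) = \<one> \<Longrightarrow> x [^] (b::nat) = \<one> \<Longrightarrow> x [^] gcd a b = \<one>"
  by (simp add: pow_eq_id)

lemma center_closed: "z \<in> center G \<Longrightarrow> z \<in> carrier G"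
  by (simp add: center_def)

lemma center_commute: "z \<in> center G \<Longrightarrow> x \<in> carrier G \<Longrightarrow> z \<otimes> x = x \<otimes> z"
  by (simp add: center_def)

lemma center_left_commute:
  "z \<in> center G \<Longrightarrow> x \<in> carrier G \<Longrightarrow> y \<in> carrier G \<Longrightarrow> x \<otimes> (z \<otimes> y) = z \<otimes> (x \<otimes> y)"
proof -
  assume z: "z \<in> center G" and x: "x \<in> carrier G" and y: "y \<in> carrier G"
  have zc: "z \<in> carrier G" using z by (rule center_closed)
  have "x \<otimes> (z \<otimes> y) = (x \<otimes> z) \<otimes> y" using zc x y by (simp add: m_assoc)
  also have "\<dots> = (z \<otimes> x) \<otimes> y" by (simp add: center_commute[OF z x])
  also have "\<dots> = z \<otimes> (x \<otimes> y)" using zc x y by (simp add: m_assoc)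
  finally show ?thesis .
qed

lemma one_in_center [simp]: "\<one> \<in> center G"
  by (simp add: center_def)

lemma center_mult: "x \<in> center G \<Longrightarrow> y \<in> center G \<Longrightarrow> x \<otimes> y \<in> center G"
proof -
  assume x: "x \<in> center G" and y: "y \<in> center G"
  have xc: "x \<in> carrier G" and yc: "y \<in> carrier G" using x y by (simp_all add: center_closed)
  have "x \<otimes> y \<otimes> z = z \<otimes> (x \<otimes> y)" if z: "z \<in> carrier G" for z
  proof -
    have "x \<otimes> y \<otimes> z = x \<otimes> (z \<otimes> y)" using xc yc z by (simp add: m_assoc center_commute[OF y z])
    also have "\<dots> = z \<otimes> (x \<otimes> y)" using center_left_commute[OF x z yc] by simp
    finally show ?thesis .
  qed
  then show ?thesis using xc yc by (simp add: center_def)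
qed

lemma conj_center: "z \<in> center G \<Longrightarrow> g \<in> carrier G \<Longrightarrow> inv g \<otimes> z \<otimes> g = z"
  by (metis center_commute center_closed inv_closed m_assoc inv_mult_cancel_left)

lemma conj_center': "z \<in> center G \<Longrightarrow> g \<in> carrier G \<Longrightarrow> g \<otimes> z \<otimes> inv g = z"
  by (metis conj_center inv_closed inv_inv)

lemma center_inv: "z \<in> center G \<Longrightarrow> inv z \<in> center G"
proof -
  assume z: "z \<in> center G"
  have "inv z \<otimes> x = x \<otimes> inv z" if x: "x \<in> carrier G" for x
  proof -
    have zc: "z \<in> carrier G" using z by (rule center_closed)
    have "inv z \<otimes> x = inv z \<otimes> (x \<otimes> z) \<otimes> inv z" using zc x by (simp add: assoc_cancel_simps)
    also have "\<dots> = inv z \<otimes> (z \<otimes> x) \<otimes> inv z" using center_commute[OF z x] by simp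
    also have "\<dots> = x \<otimes> inv z" using zc x by (simp add: assoc_cancel_simps)
    finally show ?thesis .
  qed
  then show ?thesis using center_closed[OF z] by (simp add: center_def)
qed

lemma center_nat_pow: "z \<in> center G \<Longrightarrow> z [^] (k::nat) \<in> center G"
  by (induction k) (auto simp: center_mult)

lemma center_normal: "center G \<lhd> G"
proof (rule normal_invI)
  have "center G \<noteq> {}" using one_in_center by blast
  then show "subgroup (center G) G" by (intro subgroupI) (auto simp: center_closed center_mult center_inv)
next
  fix x h assume "x \<in> carrier G" "h \<in> center G"
  then show "x \<otimes> h \<otimes> inv x \<in> center G" by (simp add: conj_center')
qed

lemma nat_pow_mult_center:
  "z \<in> center G \<Longrightarrow> x \<in> carrier G \<Longrightarrow> (x \<otimes> z) [^] (k::nat) = x [^] k \<otimes> z [^] k"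
proof (induction k)
  case 0
  then show ?case by simp
next
  case (Suc k)
  have z: "z \<in> carrier G" using Suc center_closed by auto
  have "(x \<otimes> z) [^] Suc k = x [^] k \<otimes> (z [^] k \<otimes> x) \<otimes> z"
    using Suc z by (simp add: assoc_cancel_simps)
  also have "\<dots> = x [^] Suc k \<otimes> z [^] Suc k"
    using Suc z center_commute[OF center_nat_pow[OF Suc(2)], of x] by (simp add: assoc_cancel_simps)
  finally show ?case .
qed

lemma nat_pow_center_mult:
  "z \<in> center G \<Longrightarrow> x \<in> carrier G \<Longrightarrow> (z \<otimes> x) [^] (k::nat) = z [^] k \<otimes> x [^] k"
  using nat_pow_mult_center[of z x k] center_commute[of z x] center_commute[OF center_nat_pow[of z k], of "x [^] k"]
  by simp

lemma mult_inv_nat_pow_eq_one: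
  "x \<in> center G \<Longrightarrow> y \<in> center G \<Longrightarrow> x [^] (m::nat) = y [^] m \<Longrightarrow> (x \<otimes> inv y) [^] m = \<one>"
  using nat_pow_mult_center[OF center_inv[of y] center_closed[of x]] nat_pow_inv[OF center_closed[of y]]
    center_closed[of y]
  by (simp add: nat_pow_closed)

lemma gcomm_closed [simp]: "x \<in> carrier G \<Longrightarrow> y \<in> carrier G \<Longrightarrow> gcomm G x y \<in> carrier G"
  by (simp add: gcomm_def)

lemma hall_witt:
  assumes "x \<in> carrier G" "y \<in> carrier G" "z \<in> carrier G"
  shows "(inv y \<otimes> gcomm G (gcomm G x (inv y)) z \<otimes> y) \<otimes> (inv z \<otimes> gcomm G (gcomm G y (inv z)) x \<otimes> z)
       \<otimes> (inv x \<otimes> gcomm G (gcomm G z (inv x)) y \<otimes> x) = \<one>"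
  using assms by (simp add: gcomm_def assoc_cancel_simps)

lemma gcomm_eq_one_iff:
  "x \<in> carrier G \<Longrightarrow> y \<in> carrier G \<Longrightarrow> gcomm G x y = \<one> \<longleftrightarrow> x \<otimes> y = y \<otimes> x"
proof -
  assume x: "x \<in> carrier G" and y: "y \<in> carrier G"
  have e: "gcomm G x y = inv (y \<otimes> x) \<otimes> (x \<otimes> y)"
    using x y by (simp add: gcomm_def assoc_cancel_simps)
  show ?thesis
  proof
    assume "gcomm G x y = \<one>"
    then have "(y \<otimes> x) \<otimes> (inv (y \<otimes> x) \<otimes> (x \<otimes> y)) = y \<otimes> x" using e x y by simp
    then show "x \<otimes> y = y \<otimes> x" using x y by (simp add: assoc_cancel_simps)
  next
    assume "x \<otimes> y = y \<otimes> x"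
    then show "gcomm G x y = \<one>" using e x y by simp
  qed
qed

lemma gcomm_one_right [simp]: "x \<in> carrier G \<Longrightarrow> gcomm G x \<one> = \<one>"
  by (simp add: gcomm_eq_one_iff)

lemma gcomm_one_left [simp]: "x \<in> carrier G \<Longrightarrow> gcomm G \<one> x = \<one>"
  by (simp add: gcomm_eq_one_iff)

lemma inv_gcomm: "x \<in> carrier G \<Longrightarrow> y \<in> carrier G \<Longrightarrow> inv (gcomm G x y) = gcomm G y x"
  by (simp add: gcomm_def assoc_cancel_simps)

lemma gcomm_mult_right: "x \<in> carrier G \<Longrightarrow> y \<in> carrier G \<Longrightarrow> z \<in> carrier G \<Longrightarrow>
  gcomm G x (y \<otimes> z) = gcomm G x z \<otimes> (inv z \<otimes> gcomm G x y \<otimes> z)"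
  by (simp add: gcomm_def assoc_cancel_simps)

lemma gcomm_mult_left: "x \<in> carrier G \<Longrightarrow> y \<in> carrier G \<Longrightarrow> z \<in> carrier G \<Longrightarrow>
  gcomm G (x \<otimes> y) z = (inv y \<otimes> gcomm G x z \<otimes> y) \<otimes> gcomm G y z"
  by (simp add: gcomm_def assoc_cancel_simps)

lemma gcomm_inv_right:
  "x \<in> carrier G \<Longrightarrow> y \<in> carrier G \<Longrightarrow> gcomm G x (inv y) = y \<otimes> inv (gcomm G x y) \<otimes> inv y"
  by (simp add: gcomm_def assoc_cancel_simps)

lemma gcomm_inv_left:
  "x \<in> carrier G \<Longrightarrow> y \<in> carrier G \<Longrightarrow> gcomm G (inv x) y = x \<otimes> inv (gcomm G x y) \<otimes> inv x"
  by (simp add: gcomm_def assoc_cancel_simps)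

lemma gcomm_inv_inv: "x \<in> carrier G \<Longrightarrow> y \<in> carrier G \<Longrightarrow>
   gcomm G (inv x) (inv y) = (x \<otimes> y) \<otimes> gcomm G x y \<otimes> inv (x \<otimes> y)"
  by (simp add: gcomm_def assoc_cancel_simps)

lemma conj_eq_mult_gcomm: "x \<in> carrier G \<Longrightarrow> g \<in> carrier G \<Longrightarrow> inv g \<otimes> x \<otimes> g = x \<otimes> gcomm G x g"
  by (simp add: gcomm_def assoc_cancel_simps)

lemma conj_eq_mult_gcomm':
  "x \<in> carrier G \<Longrightarrow> g \<in> carrier G \<Longrightarrow> g \<otimes> x \<otimes> inv g = x \<otimes> gcomm G x (inv g)"
  by (simp add: gcomm_def assoc_cancel_simps)

lemma gcomm_conj: "x \<in> carrier G \<Longrightarrow> y \<in> carrier G \<Longrightarrow> g \<in> carrier G \<Longrightarrow>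
   inv g \<otimes> gcomm G x y \<otimes> g = gcomm G (inv g \<otimes> x \<otimes> g) (inv g \<otimes> y \<otimes> g)"
  by (simp add: gcomm_def assoc_cancel_simps)

lemma gcomm_conj': "x \<in> carrier G \<Longrightarrow> y \<in> carrier G \<Longrightarrow> g \<in> carrier G \<Longrightarrow>
   g \<otimes> gcomm G x y \<otimes> inv g = gcomm G (g \<otimes> x \<otimes> inv g) (g \<otimes> y \<otimes> inv g)"
  by (simp add: gcomm_def assoc_cancel_simps)

lemma gcomm_conj_left: "x \<in> carrier G \<Longrightarrow> y \<in> carrier G \<Longrightarrow> g \<in> carrier G \<Longrightarrow>
  gcomm G (g \<otimes> x \<otimes> inv g) y = g \<otimes> gcomm G x (inv g \<otimes> y \<otimes> g) \<otimes> inv g"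
  by (simp add: gcomm_def assoc_cancel_simps)

lemma gcomm_eq_one_sym: "gcomm G x y = \<one> \<Longrightarrow> x \<in> carrier G \<Longrightarrow> y \<in> carrier G \<Longrightarrow> gcomm G y x = \<one>"
  by (simp add: gcomm_eq_one_iff)

lemma gcomm_inv_right_eq_one:
  "x \<in> carrier G \<Longrightarrow> y \<in> carrier G \<Longrightarrow> gcomm G x y = \<one> \<Longrightarrow> gcomm G x (inv y) = \<one>"
  using gcomm_inv_right by simp

lemma gcomm_inv_left_eq_one:
  "x \<in> carrier G \<Longrightarrow> y \<in> carrier G \<Longrightarrow> gcomm G x y = \<one> \<Longrightarrow> gcomm G (inv x) y = \<one>"
  using gcomm_inv_left by simp

lemma gcomm_mult_right_eq_one: "x \<in> carrier G \<Longrightarrow> y \<in> carrier G \<Longrightarrow> z \<in> carrier G \<Longrightarrow>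
    gcomm G x y = \<one> \<Longrightarrow> gcomm G x z = \<one> \<Longrightarrow> gcomm G x (y \<otimes> z) = \<one>"
  using gcomm_mult_right by simp

lemma gcomm_mult_left_eq_one: "x \<in> carrier G \<Longrightarrow> y \<in> carrier G \<Longrightarrow> z \<in> carrier G \<Longrightarrow>
    gcomm G x z = \<one> \<Longrightarrow> gcomm G y z = \<one> \<Longrightarrow> gcomm G (x \<otimes> y) z = \<one>"
  using gcomm_mult_left by simp

lemma conj_eq_if_gcomm_eq_one:
  "x \<in> carrier G \<Longrightarrow> g \<in> carrier G \<Longrightarrow> gcomm G x g = \<one> \<Longrightarrow> inv g \<otimes> x \<otimes> g = x"
  using conj_eq_mult_gcomm by simp

lemma conj_eq_if_gcomm_eq_one':
  "x \<in> carrier G \<Longrightarrow> g \<in> carrier G \<Longrightarrow> gcomm G x g = \<one> \<Longrightarrow> g \<otimes> x \<otimes> inv g = x"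
  using conj_eq_if_gcomm_eq_one[of x "inv g"] gcomm_inv_right_eq_one by simp

lemma gcomm_center_left: "z \<in> center G \<Longrightarrow> y \<in> carrier G \<Longrightarrow> gcomm G z y = \<one>"
  by (simp add: gcomm_eq_one_iff center_closed center_commute)

lemma gcomm_center_right: "z \<in> center G \<Longrightarrow> y \<in> carrier G \<Longrightarrow> gcomm G y z = \<one>"
  by (simp add: gcomm_eq_one_iff center_closed center_commute)

lemma gcomm_center_mult_left:
  "z \<in> center G \<Longrightarrow> x \<in> carrier G \<Longrightarrow> y \<in> carrier G \<Longrightarrow> gcomm G (z \<otimes> x) y = gcomm G x y"
  unfolding gcomm_def using center_closed[of z] center_left_commute[of z "inv y" "x \<otimes> y"] center_inv[of z]
  by (simp add: assoc_cancel_simps)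

lemma gcomm_center_mult_right:
  "z \<in> center G \<Longrightarrow> x \<in> carrier G \<Longrightarrow> y \<in> carrier G \<Longrightarrow> gcomm G y (z \<otimes> x) = gcomm G y x"
proof -
  assume z: "z \<in> center G" and x: "x \<in> carrier G" and y: "y \<in> carrier G"
  have "inv z \<otimes> (y \<otimes> t) = y \<otimes> (inv z \<otimes> t)" if "t \<in> carrier G" for t
    using center_left_commute[OF center_inv[OF z] y that] by simp
  moreover have "z \<otimes> (x \<otimes> t) = x \<otimes> (z \<otimes> t)" if "t \<in> carrier G" for t
    using center_left_commute[OF z x that] by simp
  ultimately show ?thesis
    unfolding gcomm_def using z x y center_closed[OF z] by (simp add: assoc_cancel_simps)
qed

lemma gcomm_eq_left_if_center: "x \<otimes> inv x' \<in> center G \<Longrightarrow> x \<in> carrier G \<Longrightarrow> x' \<in> carrier G \<Longrightarrow>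
    y \<in> carrier G \<Longrightarrow> gcomm G x y = gcomm G x' y"
  using gcomm_center_mult_left[of "x \<otimes> inv x'" x' y] by (simp add: assoc_cancel_simps)

lemma gcomm_eq_right_if_center: "y \<otimes> inv y' \<in> center G \<Longrightarrow> y \<in> carrier G \<Longrightarrow> y' \<in> carrier G \<Longrightarrow>
    x \<in> carrier G \<Longrightarrow> gcomm G x y = gcomm G x y'"
  using gcomm_center_mult_right[of "y \<otimes> inv y'" y' x] by (simp add: assoc_cancel_simps)

lemma gcomm_inv_right_central: "gcomm G x y \<in> center G \<Longrightarrow> x \<in> carrier G \<Longrightarrow> y \<in> carrier G \<Longrightarrow>
    gcomm G x (inv y) = inv (gcomm G x y)"
  by (metis gcomm_inv_right conj_center' center_inv inv_inv inv_closed)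

lemma gcomm_inv_left_central: "gcomm G x y \<in> center G \<Longrightarrow> x \<in> carrier G \<Longrightarrow> y \<in> carrier G \<Longrightarrow>
    gcomm G (inv x) y = inv (gcomm G x y)"
  by (metis gcomm_inv_left conj_center' center_inv)

lemma gcomm_mult_right_central: "gcomm G x y \<in> center G \<Longrightarrow> x \<in> carrier G \<Longrightarrow> y \<in> carrier G \<Longrightarrow>
    z \<in> carrier G \<Longrightarrow> gcomm G x (y \<otimes> z) = gcomm G x z \<otimes> gcomm G x y"
  by (simp add: gcomm_mult_right conj_center)

lemma gcomm_mult_right_distrib_center: "gcomm G x y \<in> center G \<Longrightarrow> gcomm G x z \<in> center G \<Longrightarrow>
    x \<in> carrier G \<Longrightarrow> y \<in> carrier G \<Longrightarrow> z \<in> carrier G \<Longrightarrow>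
    gcomm G x (y \<otimes> z) = gcomm G x y \<otimes> gcomm G x z"
  using gcomm_mult_right_central center_commute center_closed by metis

lemma Suc_choose_two: "Suc k choose 2 = k + (k choose 2)"
  by (simp add: numeral_2_eq_2)

lemma gcomm_nat_pow_right:
  assumes x: "x \<in> carrier G" and y: "y \<in> carrier G" and c: "gcomm G (gcomm G x y) y \<in> center G"
  shows "gcomm G x (y [^] (k::nat)) = gcomm G x y [^] k \<otimes> gcomm G (gcomm G x y) y [^] (k choose 2)"
proof (induction k)
  case 0
  then show ?case using x y by (simp add: numeral_2_eq_2)
next
  case (Suc k)
  let ?c = "gcomm G x y" and ?p = "gcomm G (gcomm G x y) y"
  have p: "?p \<in> carrier G" using c center_closed by blast
  have cc: "?c \<in> carrier G" using x y by simp
  have "gcomm G x (y [^] Suc k) = ?c \<otimes> (inv y \<otimes> gcomm G x (y [^] k) \<otimes> y)"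
    using gcomm_mult_right x y by simp
  also have "\<dots> = ?c \<otimes> (inv y \<otimes> ?c [^] k \<otimes> y \<otimes> (inv y \<otimes> ?p [^] (k choose 2) \<otimes> y))"
    using Suc x y p cc by (simp add: assoc_cancel_simps)
  also have "\<dots> = ?c \<otimes> ((?c \<otimes> ?p) [^] k \<otimes> ?p [^] (k choose 2))"
    using conj_nat_pow[OF cc y] conj_eq_mult_gcomm[OF cc y] conj_center[OF center_nat_pow[OF c] y]
    by simp
  also have "\<dots> = (?c \<otimes> ?c [^] k) \<otimes> (?p [^] k \<otimes> ?p [^] (k choose 2))"
    using nat_pow_mult_center[OF c cc] p cc by (simp add: assoc_cancel_simps)
  also have "\<dots> = ?c [^] Suc k \<otimes> ?p [^] (Suc k choose 2)"
    using nat_pow_Suc2[OF cc, of k, symmetric] nat_pow_mult[OF p, of k "k choose 2"]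
    by (simp add: Suc_choose_two)
  finally show ?case .
qed

lemma gcomm_nat_pow_left:
  assumes x: "x \<in> carrier G" and y: "y \<in> carrier G" and c: "gcomm G (gcomm G x y) x \<in> center G"
  shows "gcomm G (x [^] (k::nat)) y = gcomm G x y [^] k \<otimes> gcomm G (gcomm G x y) x [^] (k choose 2)"
proof (induction k)
  case 0
  then show ?case using x y by (simp add: numeral_2_eq_2)
next
  case (Suc k)
  let ?c = "gcomm G x y" and ?p = "gcomm G (gcomm G x y) x"
  have p: "?p \<in> carrier G" using c center_closed by blast
  have cc: "?c \<in> carrier G" using x y by simp
  have "gcomm G (x [^] Suc k) y = (inv x \<otimes> gcomm G (x [^] k) y \<otimes> x) \<otimes> ?c"
    using gcomm_mult_left x y by simp
  also have "\<dots> = (inv x \<otimes> ?c [^] k \<otimes> x \<otimes> (inv x \<otimes> ?p [^] (k choose 2) \<otimes> x)) \<otimes> ?c"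
    using Suc x y p cc by (simp add: assoc_cancel_simps)
  also have "\<dots> = ((?c \<otimes> ?p) [^] k \<otimes> ?p [^] (k choose 2)) \<otimes> ?c"
    using conj_nat_pow[OF cc x] conj_eq_mult_gcomm[OF cc x] conj_center[OF center_nat_pow[OF c] x]
    by simp
  also have "\<dots> = ?c [^] k \<otimes> (?c \<otimes> (?p [^] k \<otimes> ?p [^] (k choose 2)))"
    using nat_pow_mult_center[OF c cc] p cc
      center_commute[OF center_mult[OF center_nat_pow[OF c] center_nat_pow[OF c]] cc, of k "k choose 2"]
    by (simp add: assoc_cancel_simps)
  also have "\<dots> = ?c [^] Suc k \<otimes> ?p [^] (Suc k choose 2)"
    using p cc nat_pow_mult[OF p, of k "k choose 2"] by (simp add: Suc_choose_two assoc_cancel_simps)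
  finally show ?case .
qed

lemma gcomm_nat_pow_right_central: "gcomm G x y \<in> center G \<Longrightarrow> x \<in> carrier G \<Longrightarrow> y \<in> carrier G \<Longrightarrow>
   gcomm G x (y [^] (k::nat)) = gcomm G x y [^] k"
  using gcomm_nat_pow_right[of x y k] gcomm_center_left[of "gcomm G x y" y] by simp

lemma gcomm_nat_pow_left_central: "gcomm G x y \<in> center G \<Longrightarrow> x \<in> carrier G \<Longrightarrow> y \<in> carrier G \<Longrightarrow>
   gcomm G (x [^] (k::nat)) y = gcomm G x y [^] k"
  using gcomm_nat_pow_left[of x y k] gcomm_center_left[of "gcomm G x y" x] by simp

lemma gcomm_nat_pow_eq_left:
  assumes x: "x \<in> carrier G" and x': "x' \<in> carrier G" and y: "y \<in> carrier G"
    and c: "gcomm G x y \<in> center G" and c': "gcomm G x' y \<in> center G"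
    and r: "x [^] (m::nat) \<otimes> inv (x' [^] m) \<in> center G"
  shows "gcomm G x y [^] m = gcomm G x' y [^] m"
proof -
  have "gcomm G x y [^] m = gcomm G (x [^] m) y" using gcomm_nat_pow_left_central[OF c x y] by simp
  also have "\<dots> = gcomm G (x' [^] m) y" using gcomm_eq_left_if_center[OF r] x x' y by simp
  also have "\<dots> = gcomm G x' y [^] m" using gcomm_nat_pow_left_central[OF c' x' y] by simp
  finally show ?thesis .
qed

lemma gcomm_nat_pow_eq_right:
  assumes x: "x \<in> carrier G" and y: "y \<in> carrier G" and y': "y' \<in> carrier G"
    and c: "gcomm G x y \<in> center G" and c': "gcomm G x y' \<in> center G"
    and r: "y [^] (m::nat) \<otimes> inv (y' [^] m) \<in> center G"
  shows "gcomm G x y [^] m = gcomm G x y' [^] m"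
proof -
  have "gcomm G x y [^] m = gcomm G x (y [^] m)" using gcomm_nat_pow_right_central[OF c x y] by simp
  also have "\<dots> = gcomm G x (y' [^] m)" using gcomm_eq_right_if_center[OF r] x y y' by simp
  also have "\<dots> = gcomm G x y' [^] m" using gcomm_nat_pow_right_central[OF c' x y'] by simp
  finally show ?thesis .
qed

lemma mult_nat_pow_gcomm:
  assumes x: "x \<in> carrier G" and y: "y \<in> carrier G" and c: "gcomm G x y \<in> center G"
  shows "(x \<otimes> y) [^] (k::nat) = x [^] k \<otimes> y [^] k \<otimes> gcomm G y x [^] (k choose 2)"
proof (induction k)
  case 0
  then show ?case by (simp add: numeral_2_eq_2)
next
  case (Suc k)
  let ?w = "gcomm G y x"
  have cw: "?w \<in> center G" using c inv_gcomm[OF x y] center_inv by metis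
  have w: "?w \<in> carrier G" using x y by simp
  have swap: "y [^] k \<otimes> x = x \<otimes> y [^] k \<otimes> ?w [^] k"
  proof -
    have "y [^] k \<otimes> x = x \<otimes> y [^] k \<otimes> gcomm G (y [^] k) x"
      using x y by (simp add: gcomm_def assoc_cancel_simps)
    then show ?thesis using gcomm_nat_pow_left_central[OF cw y x, of k] by simp
  qed
  have "(x \<otimes> y) [^] Suc k = x [^] k \<otimes> (y [^] k \<otimes> x) \<otimes> y \<otimes> ?w [^] (k choose 2)"
    using Suc x y w center_commute[OF center_nat_pow[OF cw, of "k choose 2"], of "x \<otimes> y"]
    by (simp add: assoc_cancel_simps)
  also have "\<dots> = x [^] k \<otimes> x \<otimes> y [^] k \<otimes> (y \<otimes> ?w [^] k) \<otimes> ?w [^] (k choose 2)"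
    using swap x y w center_commute[OF center_nat_pow[OF cw, of k], of y] by (simp add: assoc_cancel_simps)
  also have "\<dots> = x [^] Suc k \<otimes> y [^] Suc k \<otimes> ?w [^] (Suc k choose 2)"
    using x y w nat_pow_mult[OF w, of k "k choose 2"] by (simp add: assoc_cancel_simps Suc_choose_two)
  finally show ?case .
qed

lemma gcomm_gcomm_inv_conj:
  assumes carrier: "x \<in> carrier G" "y \<in> carrier G" "z \<in> carrier G" "g \<in> carrier G"
    and conj_x: "g \<otimes> x \<otimes> inv g = x \<otimes> y" and gz: "gcomm G g z = \<one>"
    and xzy: "gcomm G (gcomm G x z) y = \<one>"
  shows "gcomm G (gcomm G x z) (inv g) = gcomm G y z"
proof -
  have "gcomm G (gcomm G x z) (inv g) = inv (gcomm G x z) \<otimes> (g \<otimes> gcomm G x z \<otimes> inv g)"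
    using carrier by (simp add: gcomm_def assoc_cancel_simps)
  also have "g \<otimes> gcomm G x z \<otimes> inv g = gcomm G (x \<otimes> y) z"
    using gcomm_conj'[of x z g] conj_x conj_eq_if_gcomm_eq_one'[OF _ _ gcomm_eq_one_sym[OF gz]] carrier
    by simp
  also have "\<dots> = gcomm G x z \<otimes> gcomm G y z"
    using gcomm_mult_left[of x y z] conj_eq_if_gcomm_eq_one[OF _ _ xzy] carrier by simp
  finally show ?thesis using carrier by (simp add: assoc_cancel_simps)
qed

lemma gcomm_gcomm_inv_eq_one:
  assumes carrier: "u \<in> carrier G" "w \<in> carrier G" "y \<in> carrier G" "g \<in> carrier G"
    and conj_w: "inv g \<otimes> w \<otimes> g = w \<otimes> y" and uw: "gcomm G u w = \<one>" and uy: "gcomm G u y = \<one>"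
  shows "gcomm G (gcomm G u (inv g)) w = \<one>"
proof -
  have "gcomm G (g \<otimes> u \<otimes> inv g) w = g \<otimes> gcomm G u (w \<otimes> y) \<otimes> inv g"
    using gcomm_conj_left[of u w g] conj_w carrier by simp
  then have "gcomm G (g \<otimes> u \<otimes> inv g) w = \<one>"
    using gcomm_mult_right_eq_one[OF _ _ _ uw uy] carrier by simp
  moreover have "gcomm G u (inv g) = inv u \<otimes> (g \<otimes> u \<otimes> inv g)"
    using carrier by (simp add: gcomm_def assoc_cancel_simps)
  ultimately show ?thesis
    using gcomm_mult_left_eq_one[OF _ _ _ gcomm_inv_left_eq_one[OF _ _ uw]] carrier by simp
qed

lemma gcomm_swap_in_center: "gcomm G x y \<in> center G \<Longrightarrow> x \<in> carrier G \<Longrightarrow> y \<in> carrier G \<Longrightarrow>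
    gcomm G y x \<in> center G"
  by (metis inv_gcomm center_inv)

lemma gcomm_inv_right_in_center: "gcomm G x y \<in> center G \<Longrightarrow> x \<in> carrier G \<Longrightarrow> y \<in> carrier G \<Longrightarrow>
    gcomm G x (inv y) \<in> center G"
  by (simp add: gcomm_inv_right_central center_inv)

lemma gcomm_inv_left_in_center: "gcomm G x y \<in> center G \<Longrightarrow> x \<in> carrier G \<Longrightarrow> y \<in> carrier G \<Longrightarrow>
    gcomm G (inv x) y \<in> center G"
  by (simp add: gcomm_inv_left_central center_inv)

lemma nat_pow_eq_if_mult_inv_central:
  assumes "x \<otimes> inv y \<in> center G" "(x \<otimes> inv y) [^] (m::nat) = \<one>" "x \<in> carrier G" "y \<in> carrier G"
  shows "x [^] m = y [^] m"
proof -
  have "x = (x \<otimes> inv y) \<otimes> y" using assms(3,4) by (simp add: assoc_cancel_simps)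
  then have "x [^] m = (x \<otimes> inv y) [^] m \<otimes> y [^] m"
    using nat_pow_center_mult[OF assms(1) assms(4)] by metis
  then show ?thesis using assms(2,4) by simp
qed

lemma mult_inv_nat_pow_center:
  "y \<in> center G \<Longrightarrow> x \<in> carrier G \<Longrightarrow> (x \<otimes> inv y) [^] (k::nat) = x [^] k \<otimes> inv (y [^] k)"
  using nat_pow_mult_center[OF center_inv[of y], of x k] nat_pow_inv[OF center_closed, of y k] by simp

lemma hall_witt_center:
  assumes carrier: "x \<in> carrier G" "y \<in> carrier G" "z \<in> carrier G"
    and "gcomm G (gcomm G x y) z \<in> center G" "gcomm G (gcomm G (inv y) (inv z)) x \<in> center G"
      "gcomm G (gcomm G z (inv x)) (inv y) \<in> center G"
  shows "gcomm G (gcomm G x y) z \<otimes> gcomm G (gcomm G (inv y) (inv z)) x \<otimes> gcomm G (gcomm G z (inv x)) (inv y)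
    = \<one>"
  using hall_witt[of x "inv y" z] conj_center[OF assms(4), of "inv y"] conj_center[OF assms(5) carrier(3)]
    conj_center[OF assms(6) carrier(1)] carrier
  by simp

lemma hall_witt_center_eq:
  assumes carrier: "x \<in> carrier G" "y \<in> carrier G" "z \<in> carrier G" "u \<in> carrier G"
    and "gcomm G (gcomm G x y) z \<in> center G" "gcomm G (gcomm G (inv y) (inv z)) x \<in> center G"
      "gcomm G (gcomm G z (inv x)) (inv y) \<in> center G"
    and "gcomm G (gcomm G (inv y) (inv z)) x \<otimes> gcomm G (gcomm G z (inv x)) (inv y) = inv u"
  shows "gcomm G (gcomm G x y) z = u"
  using hall_witt_center[OF carrier(1-3) assms(5-7)] assms(8) carrier
  by (simp add: m_assoc mult_inv_eq_one_iff)

abbreviation central_quotient where "central_quotient \<equiv> G Mod center G"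

definition center_coset :: "'a \<Rightarrow> 'a set" where
  "center_coset x = center G #> x"

lemma group_central_quotient: "group central_quotient"
  using center_normal normal.factorgroup_is_group by blast

lemma center_coset_hom: "group_hom G central_quotient center_coset"
  unfolding group_hom_def group_hom_axioms_def center_coset_def[abs_def]
  using group_central_quotient is_group normal.r_coset_hom_Mod[OF center_normal] by simp

lemma center_coset_closed: "x \<in> carrier G \<Longrightarrow> center_coset x \<in> carrier central_quotient"
  using group_hom.hom_closed[OF center_coset_hom] .

lemma center_coset_mult: "x \<in> carrier G \<Longrightarrow> y \<in> carrier G \<Longrightarrow>
    center_coset (x \<otimes> y) = center_coset x \<otimes>\<^bsub>central_quotient\<^esub> center_coset y"
  using group_hom.hom_mult[OF center_coset_hom] .

lemma center_coset_inv: "x \<in> carrier G \<Longrightarrow>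
    center_coset (inv x) = inv\<^bsub>central_quotient\<^esub> center_coset x"
  using group_hom.hom_inv[OF center_coset_hom] .

lemma center_coset_eq_one_iff:
  "x \<in> carrier G \<Longrightarrow> center_coset x = \<one>\<^bsub>central_quotient\<^esub> \<longleftrightarrow> x \<in> center G"
proof -
  assume x: "x \<in> carrier G"
  have sub: "subgroup (center G) G" using center_normal normal_imp_subgroup by blast
  show ?thesis
  proof
    assume "center_coset x = \<one>\<^bsub>central_quotient\<^esub>"
    then show "x \<in> center G" using rcos_self[OF x sub] by (simp add: center_coset_def)
  next
    assume "x \<in> center G"
    then show "center_coset x = \<one>\<^bsub>central_quotient\<^esub>"
      using coset_join2[OF x sub] by (simp add: center_coset_def)
  qed
qed

lemma center_coset_gcomm: "x \<in> carrier G \<Longrightarrow> y \<in> carrier G \<Longrightarrow>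
    center_coset (gcomm G x y) = gcomm central_quotient (center_coset x) (center_coset y)"
proof -
  assume "x \<in> carrier G" "y \<in> carrier G"
  interpret h: group_hom G central_quotient center_coset by (rule center_coset_hom)
  show ?thesis using \<open>x \<in> carrier G\<close> \<open>y \<in> carrier G\<close> by (simp add: gcomm_def)
qed

lemmas center_coset_transfer =
  center_coset_eq_one_iff[symmetric] center_coset_gcomm center_coset_mult center_coset_inv
  center_coset_closed group.mult_inv_eq_one_iff[OF group_central_quotient]
  group.gcomm_closed[OF group_central_quotient] group.inv_closed[OF group_central_quotient]
  group.l_inv[OF group_central_quotient]

end

section \<open>Relations among the generators\<close>

(* Throughout, a, b, a1, b1, a2, b2 stand for s_i(1), s_i(x), s_{i+1}(1), s_{i+1}(x), s_{i+2}(1),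
   s_{i+2}(x), and c, d for s_j(1), s_j(x) with j > i + 1.  In the locales ending in "exact" the
   relators hold on the nose; in the others they are only central, as in F/[R,F]. *)

locale adjacent_exact = group G for G (structure) +
  fixes a b a1 b1 :: 'a
  assumes carrier [simp]: "a \<in> carrier G" "b \<in> carrier G" "a1 \<in> carrier G" "b1 \<in> carrier G"
    and gcomm_a_b: "gcomm G a b = \<one>"
    and gcomm_a1_b1: "gcomm G a1 b1 = \<one>"
    and gcomm_inv_a_inv_b1: "gcomm G (inv a) (inv b1) = gcomm G b a1"
    and gcomm_inv_b_inv_b1: "gcomm G (inv b) (inv b1) = gcomm G b a1"
    and gcomm_gcomm_a_a1_a: "gcomm G (gcomm G a a1) a = \<one>"
    and gcomm_gcomm_b_a1_a: "gcomm G (gcomm G b a1) a = \<one>"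
    and gcomm_gcomm_a_a1_a1: "gcomm G (gcomm G a a1) a1 = \<one>"
    and gcomm_gcomm_b_a1_a1: "gcomm G (gcomm G b a1) a1 = \<one>"
begin

lemma gcomm_inv_a_b_b1: "gcomm G (inv a \<otimes> b) b1 = \<one>"
proof -
  have "a \<otimes> b1 \<otimes> inv a \<otimes> inv b1 = b \<otimes> b1 \<otimes> inv b \<otimes> inv b1"
    using gcomm_inv_a_inv_b1 gcomm_inv_b_inv_b1 by (simp add: gcomm_def)
  then have "inv b \<otimes> (a \<otimes> b1 \<otimes> inv a \<otimes> inv b1) \<otimes> (b1 \<otimes> a)
      = inv b \<otimes> (b \<otimes> b1 \<otimes> inv b \<otimes> inv b1) \<otimes> (b1 \<otimes> a)" by simp
  then have "gcomm G (inv b \<otimes> a) b1 = \<one>" by (simp add: assoc_cancel_simps gcomm_eq_one_iff)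
  then have "gcomm G (inv (inv b \<otimes> a)) b1 = \<one>" using gcomm_inv_left_eq_one by simp
  then show ?thesis by (simp add: inv_mult_group)
qed

lemma gcomm_gcomm_b_a1_b: "gcomm G (gcomm G b a1) b = \<one>"
proof -
  have "gcomm G (inv a) a = \<one>" by (simp add: gcomm_eq_one_iff)
  then have "gcomm G (inv a \<otimes> b) a = \<one>"
    using gcomm_eq_one_sym[OF gcomm_a_b] by (intro gcomm_mult_left_eq_one) simp_all
  then have "gcomm G (inv a \<otimes> b) (a \<otimes> b1 \<otimes> inv a \<otimes> inv b1) = \<one>"
    using gcomm_inv_a_b_b1 by (intro gcomm_mult_right_eq_one gcomm_inv_right_eq_one) simp_all
  moreover have "a \<otimes> b1 \<otimes> inv a \<otimes> inv b1 = gcomm G b a1"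
    using gcomm_inv_a_inv_b1 by (simp add: gcomm_def)
  ultimately have "gcomm G (inv a \<otimes> b) (gcomm G b a1) = \<one>" by simp
  then have "gcomm G (gcomm G b a1) (inv a \<otimes> b) = \<one>" by (rule gcomm_eq_one_sym) simp_all
  then have "gcomm G (gcomm G b a1) (a \<otimes> (inv a \<otimes> b)) = \<one>"
    using gcomm_mult_right_eq_one[OF _ _ _ gcomm_gcomm_b_a1_a] by simp
  then show ?thesis by (simp add: assoc_cancel_simps)
qed

lemma gcomm_b_inv_a1: "gcomm G b (inv a1) = inv (gcomm G b a1)"
  using gcomm_inv_right[of b a1] conj_eq_if_gcomm_eq_one'[of "inv (gcomm G b a1)" a1]
    gcomm_inv_left_eq_one[OF _ _ gcomm_gcomm_b_a1_a1]
  by simp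

lemma gcomm_gcomm_b_a1_b1: "gcomm G (gcomm G b a1) b1 = \<one>"
proof -
  define x where "x = gcomm G b a1"
  have x: "x \<in> carrier G" by (simp add: x_def)
  have conj_X: "gcomm G b1 (inv b) = inv b1 \<otimes> x \<otimes> b1"
    using gcomm_inv_b_inv_b1[symmetric] by (simp add: x_def gcomm_def assoc_cancel_simps)
  have "gcomm G (gcomm G b1 (inv b)) a1 = inv b1 \<otimes> gcomm G x a1 \<otimes> b1"
    using conj_X gcomm_conj[OF x _ _, of a1 b1] conj_eq_if_gcomm_eq_one[OF _ _ gcomm_a1_b1] by simp
  then have "gcomm G (gcomm G b1 (inv b)) a1 = \<one>"
    using gcomm_gcomm_b_a1_a1 by (simp add: x_def)
  then have "inv a1 \<otimes> gcomm G (inv x) b1 \<otimes> a1 = \<one>"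
    using hall_witt[of b a1 b1] gcomm_b_inv_a1 gcomm_inv_right_eq_one[OF _ _ gcomm_a1_b1] x
    by (simp add: x_def)
  then have "gcomm G (inv x) b1 = \<one>" by (rule conj_eq_one_imp) (simp_all add: x_def)
  then show ?thesis using gcomm_inv_left_eq_one[of "inv x" b1] x by (simp add: x_def)
qed

lemma gcomm_a_b1: "gcomm G a b1 = gcomm G b a1"
proof -
  have "gcomm G b a1 = (a \<otimes> b1) \<otimes> gcomm G a b1 \<otimes> inv (a \<otimes> b1)"
    using gcomm_inv_a_inv_b1 gcomm_inv_inv[of a b1] by simp
  then have "gcomm G a b1 = inv (a \<otimes> b1) \<otimes> gcomm G b a1 \<otimes> (a \<otimes> b1)"
    by (simp add: assoc_cancel_simps)
  then show ?thesis
    using conj_eq_if_gcomm_eq_one[of "gcomm G b a1" "a \<otimes> b1"]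
      gcomm_mult_right_eq_one[OF _ _ _ gcomm_gcomm_b_a1_a gcomm_gcomm_b_a1_b1] by simp
qed

lemma gcomm_b_b1: "gcomm G b b1 = gcomm G b a1"
proof -
  have "gcomm G b a1 = (b \<otimes> b1) \<otimes> gcomm G b b1 \<otimes> inv (b \<otimes> b1)"
    using gcomm_inv_b_inv_b1 gcomm_inv_inv[of b b1] by simp
  then have "gcomm G b b1 = inv (b \<otimes> b1) \<otimes> gcomm G b a1 \<otimes> (b \<otimes> b1)"
    by (simp add: assoc_cancel_simps)
  then show ?thesis
    using conj_eq_if_gcomm_eq_one[of "gcomm G b a1" "b \<otimes> b1"]
      gcomm_mult_right_eq_one[OF _ _ _ gcomm_gcomm_b_a1_b gcomm_gcomm_b_a1_b1] by simp
qed

lemma gcomm_a1_inv_a: "gcomm G a1 (inv a) = gcomm G a a1"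
  using gcomm_inv_right[of a1 a] inv_gcomm[of a1 a] conj_eq_if_gcomm_eq_one'[OF _ _ gcomm_gcomm_a_a1_a]
  by simp

lemma gcomm_b1_inv_a: "gcomm G b1 (inv a) = gcomm G b a1"
  using gcomm_inv_right[of b1 a] inv_gcomm[of b1 a] gcomm_a_b1 conj_eq_if_gcomm_eq_one'[OF _ _ gcomm_gcomm_b_a1_a]
  by (simp add: inv_gcomm)

lemma gcomm_gcomm_a_a1_b: "gcomm G (gcomm G a a1) b = \<one>"
proof -
  have "inv a \<otimes> gcomm G (gcomm G a a1) b \<otimes> a = \<one>"
    using hall_witt[of b a1 a] gcomm_b_inv_a1 gcomm_a1_inv_a
      gcomm_inv_left_eq_one[OF _ _ gcomm_gcomm_b_a1_a] gcomm_inv_right_eq_one[OF _ _ gcomm_a_b]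
    by simp
  then show ?thesis by (rule conj_eq_one_imp) simp_all
qed

lemma gcomm_gcomm_a_a1_b1: "gcomm G (gcomm G a a1) b1 = \<one>"
proof -
  define c where "c = gcomm G a a1"
  have c: "c \<in> carrier G" by (simp add: c_def)
  have "gcomm G a (inv a1) = inv c"
    using gcomm_inv_right[of a a1] conj_eq_if_gcomm_eq_one'[of "inv c" a1]
      gcomm_inv_left_eq_one[OF _ _ gcomm_gcomm_a_a1_a1]
    by (simp add: c_def)
  then have "inv a1 \<otimes> gcomm G (inv c) b1 \<otimes> a1 = \<one>"
    using hall_witt[of a a1 b1] gcomm_inv_right_eq_one[OF _ _ gcomm_a1_b1] gcomm_b1_inv_a
      gcomm_gcomm_b_a1_a1 c
    by simp
  then have "gcomm G (inv c) b1 = \<one>" by (rule conj_eq_one_imp) (simp_all add: c_def)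
  then show ?thesis using gcomm_inv_left_eq_one[of "inv c" b1] c by (simp add: c_def)
qed

lemma gcomm_b_inv_a1_b1: "gcomm G b (inv a1 \<otimes> b1) = \<one>"
proof -
  have "gcomm G b (inv a1 \<otimes> b1) = gcomm G b b1 \<otimes> (inv b1 \<otimes> gcomm G b (inv a1) \<otimes> b1)"
    using gcomm_mult_right by simp
  also have "\<dots> = gcomm G b a1 \<otimes> inv (gcomm G b a1)"
    using gcomm_b_b1 gcomm_b_inv_a1 conj_eq_if_gcomm_eq_one[of "inv (gcomm G b a1)" b1]
      gcomm_inv_left_eq_one[OF _ _ gcomm_gcomm_b_a1_b1]
    by simp
  finally show ?thesis by simp
qed

lemma gcomm_inv_a1_inv_b: "gcomm G (inv a1) (inv b) = inv (gcomm G b a1)"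
proof -
  have "gcomm G (inv a1) (inv b) = (a1 \<otimes> b) \<otimes> inv (gcomm G b a1) \<otimes> inv (a1 \<otimes> b)"
    using gcomm_inv_inv[of a1 b] inv_gcomm[of b a1] by simp
  then show ?thesis
    using conj_eq_if_gcomm_eq_one'[of "inv (gcomm G b a1)" "a1 \<otimes> b"]
      gcomm_inv_left_eq_one[OF _ _ gcomm_mult_right_eq_one[OF _ _ _ gcomm_gcomm_b_a1_a1 gcomm_gcomm_b_a1_b]]
    by simp
qed

lemma gcomm_gcomm_b_a1_inv_a_b: "gcomm G (gcomm G b a1) (inv a \<otimes> b) = \<one>"
  using gcomm_mult_right_eq_one[OF _ _ _ gcomm_inv_right_eq_one[OF _ _ gcomm_gcomm_b_a1_a] gcomm_gcomm_b_a1_b]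
  by simp

lemma gcomm_gcomm_b_a1_inv_a1_b1: "gcomm G (gcomm G b a1) (inv a1 \<otimes> b1) = \<one>"
  using gcomm_mult_right_eq_one[OF _ _ _ gcomm_inv_right_eq_one[OF _ _ gcomm_gcomm_b_a1_a1] gcomm_gcomm_b_a1_b1]
  by simp

lemma gcomm_a1_inv_b: "gcomm G a1 (inv b) = gcomm G b a1"
  using gcomm_inv_right[of a1 b] inv_gcomm[of a1 b] conj_eq_if_gcomm_eq_one'[OF _ _ gcomm_gcomm_b_a1_b]
  by simp

lemma gcomm_inv_a1_inv_a: "gcomm G (inv a1) (inv a) = inv (gcomm G a a1)"
proof -
  have "gcomm G (inv a1) (inv a) = (a1 \<otimes> a) \<otimes> inv (gcomm G a a1) \<otimes> inv (a1 \<otimes> a)"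
    using gcomm_inv_inv[of a1 a] inv_gcomm[of a a1] by simp
  then show ?thesis
    using conj_eq_if_gcomm_eq_one'[of "inv (gcomm G a a1)" "a1 \<otimes> a"]
      gcomm_inv_left_eq_one[OF _ _ gcomm_mult_right_eq_one[OF _ _ _ gcomm_gcomm_a_a1_a1 gcomm_gcomm_a_a1_a]]
    by simp
qed

end

locale adjacent_triple_exact =
  group G + first: adjacent_exact G a b a1 b1 + second: adjacent_exact G a1 b1 a2 b2
  for G (structure) and a b a1 b1 a2 b2 +
  assumes gcomm_a_a2: "gcomm G a a2 = \<one>" and gcomm_b_a2: "gcomm G b a2 = \<one>"
    and gcomm_gcomm_a_a1_gcomm_a1_a2: "gcomm G (gcomm G a a1) (gcomm G a1 a2) = \<one>"
    and gcomm_gcomm_a_a1_gcomm_b1_a2: "gcomm G (gcomm G a a1) (gcomm G b1 a2) = \<one>"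
    and gcomm_gcomm_b_a1_gcomm_a1_a2: "gcomm G (gcomm G b a1) (gcomm G a1 a2) = \<one>"
    and gcomm_gcomm_b_a1_gcomm_b1_a2: "gcomm G (gcomm G b a1) (gcomm G b1 a2) = \<one>"
begin

lemma gcomm_gcomm_a1_a2_inv_a: "gcomm G (gcomm G a1 a2) (inv a) = gcomm G (gcomm G a a1) a2"
  using conj_eq_mult_gcomm'[of a1 a] first.gcomm_a1_inv_a gcomm_a_a2
    gcomm_eq_one_sym[OF gcomm_gcomm_a_a1_gcomm_a1_a2]
  by (intro gcomm_gcomm_inv_conj) simp_all

lemma gcomm_gcomm_a1_a2_inv_b: "gcomm G (gcomm G a1 a2) (inv b) = gcomm G (gcomm G b a1) a2"
  using conj_eq_mult_gcomm'[of a1 b] first.gcomm_a1_inv_b gcomm_b_a2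
    gcomm_eq_one_sym[OF gcomm_gcomm_b_a1_gcomm_a1_a2]
  by (intro gcomm_gcomm_inv_conj) simp_all

lemma gcomm_gcomm_b1_a2_inv_a: "gcomm G (gcomm G b1 a2) (inv a) = gcomm G (gcomm G b a1) a2"
  using conj_eq_mult_gcomm'[of b1 a] first.gcomm_b1_inv_a gcomm_a_a2
    gcomm_eq_one_sym[OF gcomm_gcomm_b_a1_gcomm_b1_a2]
  by (intro gcomm_gcomm_inv_conj) simp_all

lemma gcomm_gcomm3_a_a1_a2_a1: "gcomm G (gcomm G (gcomm G a a1) a2) a1 = \<one>"
proof -
  have "gcomm G (gcomm G (gcomm G a1 a2) (inv a)) a1 = \<one>"
    using conj_eq_mult_gcomm[of a1 a] inv_gcomm[of a a1] second.gcomm_gcomm_a_a1_a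
      gcomm_inv_right_eq_one[OF _ _ gcomm_eq_one_sym[OF gcomm_gcomm_a_a1_gcomm_a1_a2]]
    by (intro gcomm_gcomm_inv_eq_one[of _ a1 "gcomm G a1 a"]) simp_all
  then show ?thesis using gcomm_gcomm_a1_a2_inv_a by simp
qed

lemma gcomm_gcomm3_a_a1_a2_b1: "gcomm G (gcomm G (gcomm G a a1) a2) b1 = \<one>"
proof -
  have "gcomm G (gcomm G (gcomm G a1 a2) (inv a)) b1 = \<one>"
    using conj_eq_mult_gcomm[of b1 a] inv_gcomm[of a b1] first.gcomm_a_b1 second.gcomm_gcomm_a_a1_b
      gcomm_inv_right_eq_one[OF _ _ gcomm_eq_one_sym[OF gcomm_gcomm_b_a1_gcomm_a1_a2]]
    by (intro gcomm_gcomm_inv_eq_one[of _ b1 "gcomm G b1 a"]) simp_all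
  then show ?thesis using gcomm_gcomm_a1_a2_inv_a by simp
qed

lemma gcomm_gcomm3_b_a1_a2_a1: "gcomm G (gcomm G (gcomm G b a1) a2) a1 = \<one>"
proof -
  have "gcomm G (gcomm G (gcomm G a1 a2) (inv b)) a1 = \<one>"
    using conj_eq_mult_gcomm[of a1 b] inv_gcomm[of b a1] second.gcomm_gcomm_a_a1_a
      gcomm_inv_right_eq_one[OF _ _ gcomm_eq_one_sym[OF gcomm_gcomm_b_a1_gcomm_a1_a2]]
    by (intro gcomm_gcomm_inv_eq_one[of _ a1 "gcomm G a1 b"]) simp_all
  then show ?thesis using gcomm_gcomm_a1_a2_inv_b by simp
qed

end

locale generator_pair = group G for G (structure) +
  fixes a b :: 'a and m1 m2 :: nat
  assumes carrier [simp]: "a \<in> carrier G" "b \<in> carrier G"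
    and gcomm_a_b_central: "gcomm G a b \<in> center G"
    and pow_quotient_central: "a [^] m1 \<otimes> inv (b [^] m1) \<in> center G"
    and b_pow_central: "b [^] m2 \<in> center G"
    and m1_dvd_m2: "m1 dvd m2"
begin

lemma gcomm_a_b_pow_m1: "gcomm G a b [^] m1 = \<one>"
proof -
  have "gcomm G a b [^] m1 = gcomm G (a [^] m1) b"
    using gcomm_nat_pow_left_central[OF gcomm_a_b_central] by simp
  also have "\<dots> = gcomm G (b [^] m1) b"
    using gcomm_eq_left_if_center[OF pow_quotient_central] by simp
  also have "\<dots> = \<one>"
    by (simp add: gcomm_eq_one_iff nat_pow_mult[symmetric] nat_pow_Suc2[symmetric])
  finally show ?thesis .
qed

lemma a_pow_m2_central: "a [^] m2 \<in> center G"
proof -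
  obtain k where k: "m2 = m1 * k" using m1_dvd_m2 by blast
  have "a [^] m1 = (a [^] m1 \<otimes> inv (b [^] m1)) \<otimes> b [^] m1" by (simp add: assoc_cancel_simps)
  then have "a [^] m2 = (a [^] m1 \<otimes> inv (b [^] m1)) [^] k \<otimes> b [^] m2"
    using k nat_pow_center_mult[OF pow_quotient_central, of "b [^] m1" k] by (simp add: nat_pow_pow)
  then show ?thesis using center_mult[OF center_nat_pow[OF pow_quotient_central] b_pow_central] by simp
qed

lemma gcomm_a_pow_m1_left: "y \<in> carrier G \<Longrightarrow> gcomm G (a [^] m1) y = gcomm G (b [^] m1) y"
  using gcomm_eq_left_if_center[OF pow_quotient_central] by simp

lemma gcomm_a_pow_m1_right: "x \<in> carrier G \<Longrightarrow> gcomm G x (a [^] m1) = gcomm G x (b [^] m1)"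
  using gcomm_eq_right_if_center[OF pow_quotient_central] by simp

lemma inv_a_b_pow_m1_central: "(inv a \<otimes> b) [^] m1 \<in> center G"
proof -
  have central: "gcomm G (inv a) b \<in> center G" "gcomm G b (inv a) \<in> center G"
    using gcomm_inv_left_in_center[OF gcomm_a_b_central] gcomm_swap_in_center by simp_all
  have "inv (a [^] m1) \<otimes> b [^] m1 = inv (a [^] m1) \<otimes> inv (a [^] m1 \<otimes> inv (b [^] m1)) \<otimes> a [^] m1"
    by (simp add: assoc_cancel_simps)
  then have "inv (a [^] m1) \<otimes> b [^] m1 \<in> center G"
    using conj_center[OF center_inv[OF pow_quotient_central], of "a [^] m1"]
      center_inv[OF pow_quotient_central] by simp
  moreover have "(inv a \<otimes> b) [^] m1 = (inv (a [^] m1) \<otimes> b [^] m1) \<otimes> gcomm G b (inv a) [^] (m1 choose 2)"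
    using mult_nat_pow_gcomm[OF _ _ central(1)] by (simp add: nat_pow_inv)
  ultimately show ?thesis using center_mult center_nat_pow[OF central(2)] by simp
qed

lemma b_inv_a_pow_m1_central: "(b \<otimes> inv a) [^] m1 \<in> center G"
proof -
  have central: "gcomm G b (inv a) \<in> center G" "gcomm G (inv a) b \<in> center G"
    using gcomm_inv_left_in_center[OF gcomm_a_b_central] gcomm_swap_in_center by simp_all
  have "(b \<otimes> inv a) [^] m1 = inv (a [^] m1 \<otimes> inv (b [^] m1)) \<otimes> gcomm G (inv a) b [^] (m1 choose 2)"
    using mult_nat_pow_gcomm[OF _ _ central(1)] by (simp add: nat_pow_inv inv_mult_group)
  then show ?thesis
    using center_mult[OF center_inv[OF pow_quotient_central] center_nat_pow[OF central(2)]] by simp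
qed

end

locale distant_pairs = group G + p: generator_pair G a b m1 m2 + q: generator_pair G c d m1 m2
  for G (structure) and a b c d m1 m2 +
  assumes gcomm_a_c_central: "gcomm G a c \<in> center G"
    and gcomm_a_d_central: "gcomm G a d \<in> center G"
    and gcomm_b_c_central: "gcomm G b c \<in> center G"
    and gcomm_b_d_central: "gcomm G b d \<in> center G"
begin

lemma gcomm_a_c_pow_m2: "gcomm G a c [^] m2 = \<one>"
  using gcomm_nat_pow_left_central[OF gcomm_a_c_central, of m2] gcomm_center_left[OF p.a_pow_m2_central]
  by simp

lemma gcomm_b_d_quotient_pow_m1: "(gcomm G b d \<otimes> inv (gcomm G a c)) [^] m1 = \<one>"
  using gcomm_nat_pow_eq_right[OF _ _ _ gcomm_a_c_central gcomm_a_d_central q.pow_quotient_central]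
    gcomm_nat_pow_eq_left[OF _ _ _ gcomm_a_d_central gcomm_b_d_central p.pow_quotient_central]
    mult_inv_nat_pow_eq_one[OF gcomm_b_d_central gcomm_a_c_central]
  by simp

lemma gcomm_b_c_quotient_pow_m1: "(gcomm G b c \<otimes> inv (gcomm G b d)) [^] m1 = \<one>"
  using gcomm_nat_pow_eq_right[OF _ _ _ gcomm_b_c_central gcomm_b_d_central q.pow_quotient_central]
    mult_inv_nat_pow_eq_one[OF gcomm_b_c_central gcomm_b_d_central]
  by simp

lemma gcomm_a_d_quotient_pow_m1: "(gcomm G a d \<otimes> inv (gcomm G b d)) [^] m1 = \<one>"
  using gcomm_nat_pow_eq_left[OF _ _ _ gcomm_a_d_central gcomm_b_d_central p.pow_quotient_central]
    mult_inv_nat_pow_eq_one[OF gcomm_a_d_central gcomm_b_d_central]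
  by simp

end

locale adjacent_pairs = group G + p: generator_pair G a b m1 m2 + q: generator_pair G a1 b1 m1 m2
  for G (structure) and a b a1 b1 m1 m2 +
  assumes gcomm_inv_a_inv_b1_mod_center: "gcomm G (inv a) (inv b1) \<otimes> inv (gcomm G b a1) \<in> center G"
    and gcomm_inv_b_inv_b1_mod_center: "gcomm G (inv b) (inv b1) \<otimes> inv (gcomm G b a1) \<in> center G"
    and gcomm_gcomm_a_a1_a_central: "gcomm G (gcomm G a a1) a \<in> center G"
    and gcomm_gcomm_b_a1_a_central: "gcomm G (gcomm G b a1) a \<in> center G"
    and gcomm_gcomm_a_a1_a1_central: "gcomm G (gcomm G a a1) a1 \<in> center G"
    and gcomm_gcomm_b_a1_a1_central: "gcomm G (gcomm G b a1) a1 \<in> center G"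
begin

lemma adjacent_exact_central_quotient:
  "adjacent_exact central_quotient (center_coset a) (center_coset b) (center_coset a1) (center_coset b1)"
  using p.gcomm_a_b_central q.gcomm_a_b_central gcomm_inv_a_inv_b1_mod_center gcomm_inv_b_inv_b1_mod_center
    gcomm_gcomm_a_a1_a_central gcomm_gcomm_b_a1_a_central gcomm_gcomm_a_a1_a1_central
    gcomm_gcomm_b_a1_a1_central
  by (intro adjacent_exact.intro adjacent_exact_axioms.intro group_central_quotient)
    (simp_all add: center_coset_transfer del: one_FactGroup mult_FactGroup)

lemma gcomm_gcomm_a_a1_b_central: "gcomm G (gcomm G a a1) b \<in> center G"
  using adjacent_exact.gcomm_gcomm_a_a1_b[OF adjacent_exact_central_quotient]
  by (simp add: center_coset_transfer del: one_FactGroup mult_FactGroup)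

lemma gcomm_gcomm_a_a1_b1_central: "gcomm G (gcomm G a a1) b1 \<in> center G"
  using adjacent_exact.gcomm_gcomm_a_a1_b1[OF adjacent_exact_central_quotient]
  by (simp add: center_coset_transfer del: one_FactGroup mult_FactGroup)

lemma gcomm_gcomm_b_a1_b_central: "gcomm G (gcomm G b a1) b \<in> center G"
  using adjacent_exact.gcomm_gcomm_b_a1_b[OF adjacent_exact_central_quotient]
  by (simp add: center_coset_transfer del: one_FactGroup mult_FactGroup)

lemma gcomm_gcomm_b_a1_b1_central: "gcomm G (gcomm G b a1) b1 \<in> center G"
  using adjacent_exact.gcomm_gcomm_b_a1_b1[OF adjacent_exact_central_quotient]
  by (simp add: center_coset_transfer del: one_FactGroup mult_FactGroup)

lemma gcomm_a_b1_mod_center: "gcomm G a b1 \<otimes> inv (gcomm G b a1) \<in> center G"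
  using adjacent_exact.gcomm_a_b1[OF adjacent_exact_central_quotient]
  by (simp add: center_coset_transfer del: one_FactGroup mult_FactGroup)

lemma gcomm_b_b1_mod_center: "gcomm G b b1 \<otimes> inv (gcomm G b a1) \<in> center G"
  using adjacent_exact.gcomm_b_b1[OF adjacent_exact_central_quotient]
  by (simp add: center_coset_transfer del: one_FactGroup mult_FactGroup)

lemma gcomm_inv_a_b_b1_central: "gcomm G (inv a \<otimes> b) b1 \<in> center G"
  using adjacent_exact.gcomm_inv_a_b_b1[OF adjacent_exact_central_quotient]
  by (simp add: center_coset_transfer del: one_FactGroup mult_FactGroup)

lemma gcomm_b_inv_a1_b1_central: "gcomm G b (inv a1 \<otimes> b1) \<in> center G"
  using adjacent_exact.gcomm_b_inv_a1_b1[OF adjacent_exact_central_quotient]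
  by (simp add: center_coset_transfer del: one_FactGroup mult_FactGroup)

lemma gcomm_inv_a1_inv_b_mod_center: "gcomm G (inv a1) (inv b) \<otimes> inv (inv (gcomm G b a1)) \<in> center G"
  using adjacent_exact.gcomm_inv_a1_inv_b[OF adjacent_exact_central_quotient]
  by (simp add: center_coset_transfer del: one_FactGroup mult_FactGroup)

lemma gcomm_inv_a1_inv_a_mod_center: "gcomm G (inv a1) (inv a) \<otimes> inv (inv (gcomm G a a1)) \<in> center G"
  using adjacent_exact.gcomm_inv_a1_inv_a[OF adjacent_exact_central_quotient]
  by (simp add: center_coset_transfer del: one_FactGroup mult_FactGroup)

lemma gcomm_b1_inv_a_mod_center: "gcomm G b1 (inv a) \<otimes> inv (gcomm G b a1) \<in> center G"
  using adjacent_exact.gcomm_b1_inv_a[OF adjacent_exact_central_quotient]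
  by (simp add: center_coset_transfer del: one_FactGroup mult_FactGroup)

lemma gcomm_gcomm_b_a1_inv_a_b_central: "gcomm G (gcomm G b a1) (inv a \<otimes> b) \<in> center G"
  using adjacent_exact.gcomm_gcomm_b_a1_inv_a_b[OF adjacent_exact_central_quotient]
  by (simp add: center_coset_transfer del: one_FactGroup mult_FactGroup)

lemma gcomm_gcomm_b_a1_inv_a1_b1_central: "gcomm G (gcomm G b a1) (inv a1 \<otimes> b1) \<in> center G"
  using adjacent_exact.gcomm_gcomm_b_a1_inv_a1_b1[OF adjacent_exact_central_quotient]
  by (simp add: center_coset_transfer del: one_FactGroup mult_FactGroup)

lemma gcomm_b_b1_quotient_pow_m1: "(gcomm G b b1 \<otimes> inv (gcomm G b a1)) [^] m1 = \<one>"
proof -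
  define d1 where "d1 = inv a1 \<otimes> b1"
  have d1: "d1 \<in> carrier G" by (simp add: d1_def)
  have "gcomm G b b1 = gcomm G b (a1 \<otimes> d1)" by (simp add: d1_def assoc_cancel_simps)
  also have "\<dots> = gcomm G b d1 \<otimes> (gcomm G b a1 \<otimes> gcomm G (gcomm G b a1) d1)"
    using gcomm_mult_right[of b a1 d1] conj_eq_mult_gcomm[of "gcomm G b a1" d1] d1 by simp
  finally have "gcomm G b b1 \<otimes> inv (gcomm G b a1) = gcomm G b d1 \<otimes> gcomm G (gcomm G b a1) d1"
    using d1 conj_center'[OF gcomm_gcomm_b_a1_inv_a1_b1_central[folded d1_def], of "gcomm G b a1"]
    by (simp add: assoc_cancel_simps)
  then have "(gcomm G b b1 \<otimes> inv (gcomm G b a1)) [^] m1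
      = gcomm G b (d1 [^] m1) \<otimes> gcomm G (gcomm G b a1) (d1 [^] m1)"
    using nat_pow_mult_center[OF gcomm_gcomm_b_a1_inv_a1_b1_central[folded d1_def], of "gcomm G b d1" m1]
      gcomm_nat_pow_right_central[OF gcomm_b_inv_a1_b1_central[folded d1_def]]
      gcomm_nat_pow_right_central[OF gcomm_gcomm_b_a1_inv_a1_b1_central[folded d1_def]] d1
    by simp
  then show ?thesis
    using gcomm_center_right[OF q.inv_a_b_pow_m1_central[folded d1_def]] d1 by simp
qed

lemma gcomm_a_b1_quotient_pow_m1: "(gcomm G a b1 \<otimes> inv (gcomm G b a1)) [^] m1 = \<one>"
proof -
  define d where "d = inv a \<otimes> b"
  have d: "d \<in> carrier G" by (simp add: d_def)
  have zd: "gcomm G (gcomm G a b1) d = gcomm G (gcomm G b a1) d"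
    using gcomm_eq_left_if_center[OF gcomm_a_b1_mod_center] d by simp
  then have zd_central: "gcomm G (gcomm G a b1) d \<in> center G"
    using gcomm_gcomm_b_a1_inv_a_b_central by (simp add: d_def)
  define k where "k = gcomm G (gcomm G a b1) d \<otimes> gcomm G d b1"
  have k_central: "k \<in> center G"
    using center_mult[OF zd_central gcomm_inv_a_b_b1_central[folded d_def]] by (simp add: k_def)
  have k: "k \<in> carrier G" using k_central by (rule center_closed)
  have "gcomm G b b1 = gcomm G (a \<otimes> d) b1" by (simp add: d_def assoc_cancel_simps)
  also have "\<dots> = (inv d \<otimes> gcomm G a b1 \<otimes> d) \<otimes> gcomm G d b1"
    using gcomm_mult_left[of a d b1] d by simp
  also have "\<dots> = gcomm G a b1 \<otimes> k"
    using conj_eq_mult_gcomm[of "gcomm G a b1" d] d by (simp add: k_def assoc_cancel_simps)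
  finally have "gcomm G a b1 = gcomm G b b1 \<otimes> inv k" using k by (simp add: assoc_cancel_simps)
  then have "gcomm G a b1 \<otimes> inv (gcomm G b a1) = gcomm G b b1 \<otimes> (inv k \<otimes> inv (gcomm G b a1))"
    using k by (simp add: m_assoc)
  also have "\<dots> = (gcomm G b b1 \<otimes> inv (gcomm G b a1)) \<otimes> inv k"
    using k center_commute[OF center_inv[OF k_central], of "inv (gcomm G b a1)"] by (simp add: m_assoc)
  finally have "gcomm G a b1 \<otimes> inv (gcomm G b a1) = (gcomm G b b1 \<otimes> inv (gcomm G b a1)) \<otimes> inv k" .
  moreover have "k [^] m1 = \<one>"
  proof -
    have "k [^] m1 = gcomm G (gcomm G a b1) (d [^] m1) \<otimes> gcomm G (d [^] m1) b1"
      using nat_pow_center_mult[OF zd_central, of "gcomm G d b1" m1]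
        gcomm_nat_pow_right_central[OF zd_central] gcomm_nat_pow_left_central[OF gcomm_inv_a_b_b1_central[folded d_def]] d
      by (simp add: k_def)
    then show ?thesis
      using gcomm_center_right[OF p.inv_a_b_pow_m1_central[folded d_def]]
        gcomm_center_left[OF p.inv_a_b_pow_m1_central[folded d_def]] by simp
  qed
  ultimately show ?thesis
    using nat_pow_center_mult[OF center_inv[OF k_central], of "gcomm G b b1 \<otimes> inv (gcomm G b a1)" m1]
      center_commute[OF center_inv[OF k_central], of "gcomm G b b1 \<otimes> inv (gcomm G b a1)"]
      gcomm_b_b1_quotient_pow_m1 k nat_pow_inv[OF k]
    by simp
qed

lemma gcomm_gcomm_a_a1_mult_inv_a:
  assumes "x \<in> carrier G" "gcomm G (gcomm G a a1) x \<in> center G"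
  shows "gcomm G (gcomm G a a1) (x \<otimes> inv a) = gcomm G (gcomm G a a1) x \<otimes> inv (gcomm G (gcomm G a a1) a)"
  using gcomm_mult_right_distrib_center[OF assms(2) gcomm_inv_right_in_center[OF gcomm_gcomm_a_a1_a_central]]
    gcomm_inv_right_central[OF gcomm_gcomm_a_a1_a_central] assms(1)
  by simp

lemma gcomm3_a_a1_a_pow_m2: "gcomm3 G a a1 a [^] m2 = \<one>"
  using gcomm_nat_pow_right_central[OF gcomm_gcomm_a_a1_a_central, of m2]
    gcomm_center_right[OF p.a_pow_m2_central]
  by (simp add: gcomm3_def)

lemma gcomm3_a_a1_a1_inv_a_pow: "gcomm3 G a a1 (a1 \<otimes> inv a) [^] gcd m2 (m2 choose 2) = \<one>"
proof -
  let ?p = "gcomm G (gcomm G a a1) a" and ?p1 = "gcomm G (gcomm G a a1) a1"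
  have "?p [^] m2 = \<one>" "?p1 [^] m2 = \<one>"
    using gcomm_nat_pow_right_central[OF gcomm_gcomm_a_a1_a_central, of m2]
      gcomm_nat_pow_right_central[OF gcomm_gcomm_a_a1_a1_central, of m2]
      gcomm_center_right[OF p.a_pow_m2_central] gcomm_center_right[OF q.a_pow_m2_central]
    by simp_all
  then have pow_m2: "(?p1 \<otimes> inv ?p) [^] m2 = \<one>"
    using mult_inv_nat_pow_eq_one[OF gcomm_gcomm_a_a1_a1_central gcomm_gcomm_a_a1_a_central] by simp
  have "gcomm G a a1 [^] m2 \<otimes> ?p [^] (m2 choose 2) = gcomm G (a [^] m2) a1"
    using gcomm_nat_pow_left[OF _ _ gcomm_gcomm_a_a1_a_central] by simp
  also have "\<dots> = gcomm G a (a1 [^] m2)"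
    using gcomm_center_left[OF p.a_pow_m2_central] gcomm_center_right[OF q.a_pow_m2_central] by simp
  also have "\<dots> = gcomm G a a1 [^] m2 \<otimes> ?p1 [^] (m2 choose 2)"
    using gcomm_nat_pow_right[OF _ _ gcomm_gcomm_a_a1_a1_central] by simp
  finally have "?p [^] (m2 choose 2) = ?p1 [^] (m2 choose 2)" by simp
  then have "(?p1 \<otimes> inv ?p) [^] (m2 choose 2) = \<one>"
    using mult_inv_nat_pow_eq_one[OF gcomm_gcomm_a_a1_a1_central gcomm_gcomm_a_a1_a_central] by simp
  then show ?thesis
    using nat_pow_gcd_eq_one[OF _ pow_m2] gcomm_gcomm_a_a1_mult_inv_a[OF _ gcomm_gcomm_a_a1_a1_central]
    by (simp add: gcomm3_def)
qed

lemma gcomm3_a_a1_b_inv_a_pow_m1: "gcomm3 G a a1 (b \<otimes> inv a) [^] m1 = \<one>"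
  using gcomm_nat_pow_eq_right[OF _ _ _ gcomm_gcomm_a_a1_a_central gcomm_gcomm_a_a1_b_central
      p.pow_quotient_central]
    mult_inv_nat_pow_eq_one[OF gcomm_gcomm_a_a1_b_central gcomm_gcomm_a_a1_a_central]
    gcomm_gcomm_a_a1_mult_inv_a[OF _ gcomm_gcomm_a_a1_b_central]
  by (simp add: gcomm3_def)

lemma gcomm_gcomm_a_a1_b_eq: "gcomm G (gcomm G a a1) b = gcomm G (gcomm G b a1) a"
proof -
  have "gcomm G (gcomm G (inv a1) (inv b)) a = gcomm G (inv (gcomm G b a1)) a"
    using gcomm_eq_left_if_center[OF gcomm_inv_a1_inv_b_mod_center] by simp
  also have "\<dots> = inv (gcomm G (gcomm G b a1) a)"
    using gcomm_inv_left_central[OF gcomm_gcomm_b_a1_a_central] by simp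
  finally have "gcomm G (gcomm G a a1) b \<otimes> inv (gcomm G (gcomm G b a1) a) = \<one>"
    using hall_witt_center[of a a1 b] gcomm_gcomm_a_a1_b_central
      gcomm_inv_left_in_center[OF gcomm_gcomm_b_a1_a_central] center_inv[OF gcomm_gcomm_b_a1_a_central]
      gcomm_center_left[OF gcomm_inv_right_in_center[OF gcomm_swap_in_center[OF p.gcomm_a_b_central]]]
    by simp
  then show ?thesis by (simp add: mult_inv_eq_one_iff)
qed

lemma gcomm_gcomm_a_a1_b1_eq: "gcomm G (gcomm G a a1) b1 = gcomm G (gcomm G b a1) a1"
proof -
  have "gcomm G (gcomm G b1 (inv a)) (inv a1) = gcomm G (gcomm G b a1) (inv a1)"
    using gcomm_eq_left_if_center[OF gcomm_b1_inv_a_mod_center] by simp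
  also have "\<dots> = inv (gcomm G (gcomm G b a1) a1)"
    using gcomm_inv_right_central[OF gcomm_gcomm_b_a1_a1_central] by simp
  finally have "gcomm G (gcomm G a a1) b1 \<otimes> inv (gcomm G (gcomm G b a1) a1) = \<one>"
    using hall_witt_center[of a a1 b1] gcomm_gcomm_a_a1_b1_central
      gcomm_center_left[OF gcomm_inv_left_in_center[OF gcomm_inv_right_in_center[OF q.gcomm_a_b_central]]]
      gcomm_inv_right_in_center[OF gcomm_gcomm_b_a1_a1_central] center_inv[OF gcomm_gcomm_b_a1_a1_central]
    by simp
  then show ?thesis by (simp add: mult_inv_eq_one_iff)
qed

lemma gcomm_a_b1_pow_m1: "gcomm G a b1 [^] m1 = gcomm G b a1 [^] m1"
  using nat_pow_eq_if_mult_inv_central[OF gcomm_a_b1_mod_center gcomm_a_b1_quotient_pow_m1] by simp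

lemma gcomm_b_b1_pow_m1: "gcomm G b b1 [^] m1 = gcomm G b a1 [^] m1"
  using nat_pow_eq_if_mult_inv_central[OF gcomm_b_b1_mod_center gcomm_b_b1_quotient_pow_m1] by simp

lemma gcomm_gcomm_b_a1_a1_pow_choose:
  "gcomm G (gcomm G b a1) a1 [^] (m1 choose 2) = gcomm G (gcomm G b a1) b1 [^] (m1 choose 2)"
proof -
  let ?X = "gcomm G b a1" and ?C = "m1 choose 2"
  have bb1_X: "gcomm G (gcomm G b b1) w = gcomm G ?X w" if "w \<in> carrier G" for w
    using gcomm_eq_left_if_center[OF gcomm_b_b1_mod_center] that by simp
  have "?X [^] m1 \<otimes> gcomm G ?X a1 [^] ?C = gcomm G b (a1 [^] m1)"
    using gcomm_nat_pow_right[OF _ _ gcomm_gcomm_b_a1_a1_central] by simp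
  also have "\<dots> = gcomm G b (b1 [^] m1)" using q.gcomm_a_pow_m1_right by simp
  also have "\<dots> = ?X [^] m1 \<otimes> gcomm G ?X b1 [^] ?C"
    using gcomm_nat_pow_right[of b b1 m1] bb1_X gcomm_gcomm_b_a1_b1_central gcomm_b_b1_pow_m1 by simp
  finally show ?thesis by simp
qed

lemma gcomm_gcomm_b_a1_a_pow_choose:
  "gcomm G (gcomm G b a1) a [^] (m1 choose 2) = gcomm G (gcomm G b a1) b [^] (m1 choose 2)"
proof -
  let ?X = "gcomm G b a1" and ?C = "m1 choose 2"
  have bb1_X: "gcomm G (gcomm G b b1) w = gcomm G ?X w" if "w \<in> carrier G" for w
    using gcomm_eq_left_if_center[OF gcomm_b_b1_mod_center] that by simp
  have ab1_X: "gcomm G (gcomm G a b1) w = gcomm G ?X w" if "w \<in> carrier G" for w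
    using gcomm_eq_left_if_center[OF gcomm_a_b1_mod_center] that by simp
  have "?X [^] m1 \<otimes> gcomm G ?X a [^] ?C = gcomm G (a [^] m1) b1"
    using gcomm_nat_pow_left[of a b1 m1] ab1_X gcomm_gcomm_b_a1_a_central gcomm_a_b1_pow_m1 by simp
  also have "\<dots> = gcomm G (b [^] m1) b1" using p.gcomm_a_pow_m1_left by simp
  also have "\<dots> = ?X [^] m1 \<otimes> gcomm G ?X b [^] ?C"
    using gcomm_nat_pow_left[of b b1 m1] bb1_X gcomm_gcomm_b_a1_b_central gcomm_b_b1_pow_m1 by simp
  finally show ?thesis by simp
qed

lemma gcomm_gcomm_a_a1_pow_choose:
  "gcomm G (gcomm G a a1) a1 [^] (m1 choose 2) \<otimes> inv (gcomm G (gcomm G a a1) a [^] (m1 choose 2))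
    = gcomm G (gcomm G b a1) b1 [^] (m1 choose 2) \<otimes> inv (gcomm G (gcomm G b a1) b [^] (m1 choose 2))"
proof -
  let ?c = "gcomm G a a1" and ?X = "gcomm G b a1" and ?C = "m1 choose 2"
  define w where "w = inv (?c [^] m1) \<otimes> ?X [^] m1"
  have w: "w \<in> carrier G" by (simp add: w_def)
  have ab1_X: "gcomm G (gcomm G a b1) w = gcomm G ?X w" if "w \<in> carrier G" for w
    using gcomm_eq_left_if_center[OF gcomm_a_b1_mod_center] that by simp
  have "?c [^] m1 \<otimes> gcomm G ?c a1 [^] ?C = gcomm G a (a1 [^] m1)"
    using gcomm_nat_pow_right[OF _ _ gcomm_gcomm_a_a1_a1_central] by simp
  also have "\<dots> = gcomm G a (b1 [^] m1)" using q.gcomm_a_pow_m1_right by simp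
  also have "\<dots> = ?X [^] m1 \<otimes> gcomm G ?X b1 [^] ?C"
    using gcomm_nat_pow_right[of a b1 m1] ab1_X gcomm_gcomm_b_a1_b1_central gcomm_a_b1_pow_m1 by simp
  finally have p1: "gcomm G ?c a1 [^] ?C = w \<otimes> gcomm G ?X b1 [^] ?C"
    using inv_solve_left[of "gcomm G ?c a1 [^] ?C" "?c [^] m1" "?X [^] m1 \<otimes> gcomm G ?X b1 [^] ?C"]
    by (simp add: w_def m_assoc)
  have "?c [^] m1 \<otimes> gcomm G ?c a [^] ?C = gcomm G (a [^] m1) a1"
    using gcomm_nat_pow_left[OF _ _ gcomm_gcomm_a_a1_a_central] by simp
  also have "\<dots> = gcomm G (b [^] m1) a1" using p.gcomm_a_pow_m1_left by simp
  also have "\<dots> = ?X [^] m1 \<otimes> gcomm G ?X b [^] ?C"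
    using gcomm_nat_pow_left[OF _ _ gcomm_gcomm_b_a1_b_central] by simp
  finally have p: "gcomm G ?c a [^] ?C = w \<otimes> gcomm G ?X b [^] ?C"
    using inv_solve_left[of "gcomm G ?c a [^] ?C" "?c [^] m1" "?X [^] m1 \<otimes> gcomm G ?X b [^] ?C"]
    by (simp add: w_def m_assoc)
  have "gcomm G ?c a1 [^] ?C \<otimes> inv (gcomm G ?c a [^] ?C)
      = w \<otimes> (gcomm G ?X b1 [^] ?C \<otimes> inv (gcomm G ?X b [^] ?C)) \<otimes> inv w"
    using p1 p w by (simp add: assoc_cancel_simps)
  also have "\<dots> = gcomm G ?X b1 [^] ?C \<otimes> inv (gcomm G ?X b [^] ?C)"
    using conj_center'[OF center_mult[OF center_nat_pow[OF gcomm_gcomm_b_a1_b1_central]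
        center_inv[OF center_nat_pow[OF gcomm_gcomm_b_a1_b_central]]] w] .
  finally show ?thesis .
qed

lemma gcomm3_a_a1_b_inv_b1_eq: "gcomm3 G a a1 (b \<otimes> inv b1 \<otimes> inv (a \<otimes> inv a1))
    = (gcomm G (gcomm G a a1) b \<otimes> inv (gcomm G (gcomm G a a1) b1))
      \<otimes> (gcomm G (gcomm G a a1) a1 \<otimes> inv (gcomm G (gcomm G a a1) a))"
proof -
  let ?c = "gcomm G a a1"
  have bb1: "gcomm G ?c (b \<otimes> inv b1) = gcomm G ?c b \<otimes> inv (gcomm G ?c b1)"
    using gcomm_mult_right_distrib_center[OF gcomm_gcomm_a_a1_b_central gcomm_inv_right_in_center[OF gcomm_gcomm_a_a1_b1_central]]
      gcomm_inv_right_central[OF gcomm_gcomm_a_a1_b1_central]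
    by simp
  have "b \<otimes> inv b1 \<otimes> inv (a \<otimes> inv a1) = (b \<otimes> inv b1) \<otimes> (a1 \<otimes> inv a)"
    by (simp add: assoc_cancel_simps)
  moreover have "gcomm G ?c ((b \<otimes> inv b1) \<otimes> (a1 \<otimes> inv a)) = gcomm G ?c (b \<otimes> inv b1) \<otimes> gcomm G ?c (a1 \<otimes> inv a)"
    using bb1 gcomm_gcomm_a_a1_mult_inv_a[OF _ gcomm_gcomm_a_a1_a1_central]
      center_mult[OF gcomm_gcomm_a_a1_b_central center_inv[OF gcomm_gcomm_a_a1_b1_central]]
      center_mult[OF gcomm_gcomm_a_a1_a1_central center_inv[OF gcomm_gcomm_a_a1_a_central]]
    by (intro gcomm_mult_right_distrib_center) simp_all
  ultimately show ?thesis
    using bb1 gcomm_gcomm_a_a1_mult_inv_a[OF _ gcomm_gcomm_a_a1_a1_central] by (simp add: gcomm3_def)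
qed

lemma gcomm3_a_a1_b_inv_b1_pow: "gcomm3 G a a1 (b \<otimes> inv b1 \<otimes> inv (a \<otimes> inv a1)) [^] gcd m1 (m1 choose 2) = \<one>"
proof -
  let ?r = "gcomm G (gcomm G a a1) b" and ?s = "gcomm G (gcomm G a a1) b1"
    and ?p1 = "gcomm G (gcomm G a a1) a1" and ?p = "gcomm G (gcomm G a a1) a"
  have pow: "gcomm3 G a a1 (b \<otimes> inv b1 \<otimes> inv (a \<otimes> inv a1)) [^] k
      = (?r [^] k \<otimes> inv (?s [^] k)) \<otimes> (?p1 [^] k \<otimes> inv (?p [^] k))" for k :: nat
    using gcomm3_a_a1_b_inv_b1_eq
      nat_pow_mult_center[OF center_mult[OF gcomm_gcomm_a_a1_a1_central center_inv[OF gcomm_gcomm_a_a1_a_central]]]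
      mult_inv_nat_pow_center[OF gcomm_gcomm_a_a1_b1_central] mult_inv_nat_pow_center[OF gcomm_gcomm_a_a1_a_central]
    by simp
  have "?p [^] m1 = ?r [^] m1"
    using gcomm_nat_pow_eq_right[OF _ _ _ gcomm_gcomm_a_a1_a_central gcomm_gcomm_a_a1_b_central
        p.pow_quotient_central] by simp
  moreover have "?p1 [^] m1 = ?s [^] m1"
    using gcomm_nat_pow_eq_right[OF _ _ _ gcomm_gcomm_a_a1_a1_central gcomm_gcomm_a_a1_b1_central
        q.pow_quotient_central] by simp
  ultimately have m1: "gcomm3 G a a1 (b \<otimes> inv b1 \<otimes> inv (a \<otimes> inv a1)) [^] m1 = \<one>"
    using pow[of m1] by (simp add: assoc_cancel_simps)
  have "?p1 [^] (m1 choose 2) \<otimes> inv (?p [^] (m1 choose 2))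
      = ?s [^] (m1 choose 2) \<otimes> inv (?r [^] (m1 choose 2))"
    using gcomm_gcomm_a_a1_pow_choose gcomm_gcomm_b_a1_a1_pow_choose gcomm_gcomm_b_a1_a_pow_choose
      gcomm_gcomm_a_a1_b_eq gcomm_gcomm_a_a1_b1_eq by simp
  then have "gcomm3 G a a1 (b \<otimes> inv b1 \<otimes> inv (a \<otimes> inv a1)) [^] (m1 choose 2) = \<one>"
    using pow[of "m1 choose 2"] by (simp add: assoc_cancel_simps)
  then show ?thesis using nat_pow_gcd_eq_one[OF _ m1] by (simp add: gcomm3_def)
qed

end

locale adjacent_triple =
  group G + first: adjacent_pairs G a b a1 b1 m1 m2 + second: adjacent_pairs G a1 b1 a2 b2 m1 m2
  for G (structure) and a b a1 b1 a2 b2 m1 m2 +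
  assumes gcomm_a_a2_central: "gcomm G a a2 \<in> center G"
    and gcomm_b_a2_central: "gcomm G b a2 \<in> center G"
    and gcomm_gcomm_a_a1_gcomm_a1_a2_central: "gcomm G (gcomm G a a1) (gcomm G a1 a2) \<in> center G"
    and gcomm_gcomm_a_a1_gcomm_b1_a2_central: "gcomm G (gcomm G a a1) (gcomm G b1 a2) \<in> center G"
    and gcomm_gcomm_b_a1_gcomm_a1_a2_central: "gcomm G (gcomm G b a1) (gcomm G a1 a2) \<in> center G"
    and gcomm_gcomm_b_a1_gcomm_b1_a2_central: "gcomm G (gcomm G b a1) (gcomm G b1 a2) \<in> center G"
begin

lemma adjacent_triple_exact_central_quotient: "adjacent_triple_exact central_quotient
    (center_coset a) (center_coset b) (center_coset a1) (center_coset b1) (center_coset a2) (center_coset b2)"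
  using first.adjacent_exact_central_quotient second.adjacent_exact_central_quotient
    gcomm_a_a2_central gcomm_b_a2_central gcomm_gcomm_a_a1_gcomm_a1_a2_central
    gcomm_gcomm_a_a1_gcomm_b1_a2_central gcomm_gcomm_b_a1_gcomm_a1_a2_central
    gcomm_gcomm_b_a1_gcomm_b1_a2_central
  by (intro adjacent_triple_exact.intro adjacent_triple_exact_axioms.intro group_central_quotient)
    (simp_all add: center_coset_transfer del: one_FactGroup mult_FactGroup)

lemma gcomm_gcomm_a1_a2_inv_a_mod_center:
  "gcomm G (gcomm G a1 a2) (inv a) \<otimes> inv (gcomm G (gcomm G a a1) a2) \<in> center G"
  using adjacent_triple_exact.gcomm_gcomm_a1_a2_inv_a[OF adjacent_triple_exact_central_quotient]
  by (simp add: center_coset_transfer del: one_FactGroup mult_FactGroup)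

lemma gcomm_gcomm_a1_a2_inv_b_mod_center:
  "gcomm G (gcomm G a1 a2) (inv b) \<otimes> inv (gcomm G (gcomm G b a1) a2) \<in> center G"
  using adjacent_triple_exact.gcomm_gcomm_a1_a2_inv_b[OF adjacent_triple_exact_central_quotient]
  by (simp add: center_coset_transfer del: one_FactGroup mult_FactGroup)

lemma gcomm_gcomm_b1_a2_inv_a_mod_center:
  "gcomm G (gcomm G b1 a2) (inv a) \<otimes> inv (gcomm G (gcomm G b a1) a2) \<in> center G"
  using adjacent_triple_exact.gcomm_gcomm_b1_a2_inv_a[OF adjacent_triple_exact_central_quotient]
  by (simp add: center_coset_transfer del: one_FactGroup mult_FactGroup)

lemma gcomm_gcomm3_a_a1_a2_a1_central: "gcomm G (gcomm G (gcomm G a a1) a2) a1 \<in> center G"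
  using adjacent_triple_exact.gcomm_gcomm3_a_a1_a2_a1[OF adjacent_triple_exact_central_quotient]
  by (simp add: center_coset_transfer del: one_FactGroup mult_FactGroup)

lemma gcomm_gcomm3_a_a1_a2_b1_central: "gcomm G (gcomm G (gcomm G a a1) a2) b1 \<in> center G"
  using adjacent_triple_exact.gcomm_gcomm3_a_a1_a2_b1[OF adjacent_triple_exact_central_quotient]
  by (simp add: center_coset_transfer del: one_FactGroup mult_FactGroup)

lemma gcomm_gcomm3_b_a1_a2_a1_central: "gcomm G (gcomm G (gcomm G b a1) a2) a1 \<in> center G"
  using adjacent_triple_exact.gcomm_gcomm3_b_a1_a2_a1[OF adjacent_triple_exact_central_quotient]
  by (simp add: center_coset_transfer del: one_FactGroup mult_FactGroup)

lemma gcomm4_a_a1_a2_a1_eq: "gcomm G (gcomm G (gcomm G a a1) a2) a1 = gcomm G (gcomm G a1 a2) (gcomm G a a1)"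
proof -
  have "gcomm G (gcomm G (inv a2) (inv a1)) (gcomm G a a1) = inv (gcomm G (gcomm G a1 a2) (gcomm G a a1))"
    using gcomm_eq_left_if_center[OF second.gcomm_inv_a1_inv_a_mod_center]
      gcomm_inv_left_central[OF gcomm_swap_in_center[OF gcomm_gcomm_a_a1_gcomm_a1_a2_central]] by simp
  moreover have "gcomm G (gcomm G a1 (inv (gcomm G a a1))) (inv a2) = \<one>"
    using gcomm_center_left[OF gcomm_inv_right_in_center[OF gcomm_swap_in_center[OF first.gcomm_gcomm_a_a1_a1_central]]]
    by simp
  ultimately show ?thesis
    using hall_witt_center_eq[of "gcomm G a a1" a2 a1] gcomm_gcomm3_a_a1_a2_a1_central
      center_inv[OF gcomm_swap_in_center[OF gcomm_gcomm_a_a1_gcomm_a1_a2_central]] by simp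
qed

lemma gcomm_gcomm_a_a1_gcomm_a1_a2_eq:
  "gcomm G (gcomm G a a1) (gcomm G a1 a2) = gcomm G (gcomm G (gcomm G a a1) a2) a1"
proof -
  have "gcomm G (gcomm G (inv a1) (inv (gcomm G a1 a2))) a = \<one>"
    using gcomm_center_left[OF gcomm_inv_left_in_center[OF gcomm_inv_right_in_center[OF
          gcomm_swap_in_center[OF second.gcomm_gcomm_a_a1_a_central]]]] by simp
  moreover have "gcomm G (gcomm G (gcomm G a1 a2) (inv a)) (inv a1) = inv (gcomm G (gcomm G (gcomm G a a1) a2) a1)"
    using gcomm_eq_left_if_center[OF gcomm_gcomm_a1_a2_inv_a_mod_center]
      gcomm_inv_right_central[OF gcomm_gcomm3_a_a1_a2_a1_central] by simp
  ultimately show ?thesis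
    using hall_witt_center_eq[of a a1 "gcomm G a1 a2"] gcomm_gcomm_a_a1_gcomm_a1_a2_central
      center_inv[OF gcomm_gcomm3_a_a1_a2_a1_central] by simp
qed

lemma gcomm4_a_a1_a2_b1_eq: "gcomm G (gcomm G (gcomm G a a1) a2) b1 = gcomm G (gcomm G b1 a2) (gcomm G a a1)"
proof -
  have "gcomm G (gcomm G (inv a2) (inv b1)) (gcomm G a a1) = inv (gcomm G (gcomm G b1 a2) (gcomm G a a1))"
    using gcomm_eq_left_if_center[OF second.gcomm_inv_a1_inv_b_mod_center]
      gcomm_inv_left_central[OF gcomm_swap_in_center[OF gcomm_gcomm_a_a1_gcomm_b1_a2_central]] by simp
  moreover have "gcomm G (gcomm G b1 (inv (gcomm G a a1))) (inv a2) = \<one>"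
    using gcomm_center_left[OF gcomm_inv_right_in_center[OF gcomm_swap_in_center[OF first.gcomm_gcomm_a_a1_b1_central]]]
    by simp
  ultimately show ?thesis
    using hall_witt_center_eq[of "gcomm G a a1" a2 b1] gcomm_gcomm3_a_a1_a2_b1_central
      center_inv[OF gcomm_swap_in_center[OF gcomm_gcomm_a_a1_gcomm_b1_a2_central]] by simp
qed

lemma gcomm_gcomm_a_a1_gcomm_b1_a2_eq:
  "gcomm G (gcomm G a a1) (gcomm G b1 a2) = gcomm G (gcomm G (gcomm G b a1) a2) a1"
proof -
  have "gcomm G (gcomm G (inv a1) (inv (gcomm G b1 a2))) a = \<one>"
    using gcomm_center_left[OF gcomm_inv_left_in_center[OF gcomm_inv_right_in_center[OF
          gcomm_swap_in_center[OF second.gcomm_gcomm_b_a1_a_central]]]] by simp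
  moreover have "gcomm G (gcomm G (gcomm G b1 a2) (inv a)) (inv a1) = inv (gcomm G (gcomm G (gcomm G b a1) a2) a1)"
    using gcomm_eq_left_if_center[OF gcomm_gcomm_b1_a2_inv_a_mod_center]
      gcomm_inv_right_central[OF gcomm_gcomm3_b_a1_a2_a1_central] by simp
  ultimately show ?thesis
    using hall_witt_center_eq[of a a1 "gcomm G b1 a2"] gcomm_gcomm_a_a1_gcomm_b1_a2_central
      center_inv[OF gcomm_gcomm3_b_a1_a2_a1_central] by simp
qed

lemma gcomm4_b_a1_a2_a1_eq: "gcomm G (gcomm G (gcomm G b a1) a2) a1 = gcomm G (gcomm G a1 a2) (gcomm G b a1)"
proof -
  have "gcomm G (gcomm G (inv a2) (inv a1)) (gcomm G b a1) = inv (gcomm G (gcomm G a1 a2) (gcomm G b a1))"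
    using gcomm_eq_left_if_center[OF second.gcomm_inv_a1_inv_a_mod_center]
      gcomm_inv_left_central[OF gcomm_swap_in_center[OF gcomm_gcomm_b_a1_gcomm_a1_a2_central]] by simp
  moreover have "gcomm G (gcomm G a1 (inv (gcomm G b a1))) (inv a2) = \<one>"
    using gcomm_center_left[OF gcomm_inv_right_in_center[OF gcomm_swap_in_center[OF first.gcomm_gcomm_b_a1_a1_central]]]
    by simp
  ultimately show ?thesis
    using hall_witt_center_eq[of "gcomm G b a1" a2 a1] gcomm_gcomm3_b_a1_a2_a1_central
      center_inv[OF gcomm_swap_in_center[OF gcomm_gcomm_b_a1_gcomm_a1_a2_central]] by simp
qed

lemma gcomm_gcomm_b_a1_gcomm_a1_a2_eq:
  "gcomm G (gcomm G b a1) (gcomm G a1 a2) = gcomm G (gcomm G (gcomm G b a1) a2) a1"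
proof -
  have "gcomm G (gcomm G (inv a1) (inv (gcomm G a1 a2))) b = \<one>"
    using gcomm_center_left[OF gcomm_inv_left_in_center[OF gcomm_inv_right_in_center[OF
          gcomm_swap_in_center[OF second.gcomm_gcomm_a_a1_a_central]]]] by simp
  moreover have "gcomm G (gcomm G (gcomm G a1 a2) (inv b)) (inv a1) = inv (gcomm G (gcomm G (gcomm G b a1) a2) a1)"
    using gcomm_eq_left_if_center[OF gcomm_gcomm_a1_a2_inv_b_mod_center]
      gcomm_inv_right_central[OF gcomm_gcomm3_b_a1_a2_a1_central] by simp
  ultimately show ?thesis
    using hall_witt_center_eq[of b a1 "gcomm G a1 a2"] gcomm_gcomm_b_a1_gcomm_a1_a2_central
      center_inv[OF gcomm_gcomm3_b_a1_a2_a1_central] by simp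
qed

lemma gcomm4_a_a1_a2_a1_self_inverse:
  "gcomm G (gcomm G (gcomm G a a1) a2) a1 = inv (gcomm G (gcomm G (gcomm G a a1) a2) a1)"
  using gcomm4_a_a1_a2_a1_eq gcomm_gcomm_a_a1_gcomm_a1_a2_eq inv_gcomm[of "gcomm G a a1" "gcomm G a1 a2"]
  by simp

lemma gcomm4_a_a1_a2_b1_self_inverse:
  "gcomm G (gcomm G (gcomm G a a1) a2) b1 = inv (gcomm G (gcomm G (gcomm G a a1) a2) b1)"
proof -
  let ?u = "gcomm G (gcomm G (gcomm G b a1) a2) a1"
  have "?u = inv ?u"
    using gcomm4_b_a1_a2_a1_eq gcomm_gcomm_b_a1_gcomm_a1_a2_eq inv_gcomm[of "gcomm G b a1" "gcomm G a1 a2"]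
    by simp
  moreover have "gcomm G (gcomm G (gcomm G a a1) a2) b1 = inv ?u"
    using gcomm4_a_a1_a2_b1_eq gcomm_gcomm_a_a1_gcomm_b1_a2_eq inv_gcomm[of "gcomm G a a1" "gcomm G b1 a2"]
    by simp
  ultimately show ?thesis by simp
qed

lemma gcomm4_a_a1_a2_a1_pow: "gcomm4 G a a1 a2 a1 [^] gcd 2 m2 = \<one>"
proof -
  let ?t = "gcomm G (gcomm G (gcomm G a a1) a2) a1"
  have "?t [^] (2::nat) = \<one>" using gcomm4_a_a1_a2_a1_self_inverse by (simp add: nat_pow_two_eq_one)
  moreover have "?t [^] m2 = \<one>"
    using gcomm_nat_pow_right_central[OF gcomm_gcomm3_a_a1_a2_a1_central, of m2]
      gcomm_center_right[OF first.q.a_pow_m2_central] by simp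
  ultimately show ?thesis using nat_pow_gcd_eq_one by (simp add: gcomm4_def gcomm3_def)
qed

lemma gcomm4_a_a1_a2_b1_inv_a1_pow: "gcomm4 G a a1 a2 (b1 \<otimes> inv a1) [^] gcd 2 m1 = \<one>"
proof -
  let ?d = "gcomm G (gcomm G a a1) a2"
  have prod: "gcomm G ?d (b1 \<otimes> inv a1) = gcomm G ?d b1 \<otimes> inv (gcomm G ?d a1)"
    using gcomm_mult_right_distrib_center[OF gcomm_gcomm3_a_a1_a2_b1_central
        gcomm_inv_right_in_center[OF gcomm_gcomm3_a_a1_a2_a1_central]]
      gcomm_inv_right_central[OF gcomm_gcomm3_a_a1_a2_a1_central] by simp
  have "gcomm G ?d b1 [^] (2::nat) = gcomm G ?d a1 [^] (2::nat)"
    using gcomm4_a_a1_a2_b1_self_inverse gcomm4_a_a1_a2_a1_self_inverse by (simp add: nat_pow_two_eq_one)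
  then have "gcomm G ?d (b1 \<otimes> inv a1) [^] (2::nat) = \<one>"
    using prod mult_inv_nat_pow_eq_one[OF gcomm_gcomm3_a_a1_a2_b1_central gcomm_gcomm3_a_a1_a2_a1_central]
    by simp
  moreover have "gcomm G ?d (b1 \<otimes> inv a1) [^] m1 = \<one>"
    using prod gcomm_nat_pow_right_central[of ?d "b1 \<otimes> inv a1" m1]
      center_mult[OF gcomm_gcomm3_a_a1_a2_b1_central center_inv[OF gcomm_gcomm3_a_a1_a2_a1_central]]
      gcomm_center_right[OF first.q.b_inv_a_pow_m1_central] by simp
  ultimately show ?thesis using nat_pow_gcd_eq_one by (simp add: gcomm4_def gcomm3_def)
qed

end

section \<open>The group F/[R,F]\<close>

context group
begin

lemma normal_closure_normal:
  assumes "Y \<subseteq> carrier G"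
  shows "normal_closure G Y \<lhd> G"
  unfolding normal_closure_def
proof (rule normal_generateI)
  show "(\<Union>x \<in> Y. \<Union>y \<in> carrier G. {inv y \<otimes> x \<otimes> y}) \<subseteq> carrier G" using assms by auto
next
  fix h g assume "h \<in> (\<Union>x \<in> Y. \<Union>y \<in> carrier G. {inv y \<otimes> x \<otimes> y})" and g: "g \<in> carrier G"
  then obtain x y where x: "x \<in> Y" and y: "y \<in> carrier G" and h: "h = inv y \<otimes> x \<otimes> y" by blast
  have "g \<otimes> h \<otimes> inv g = inv (y \<otimes> inv g) \<otimes> x \<otimes> (y \<otimes> inv g)"
    using h g y x assms by (auto simp: assoc_cancel_simps)
  then show "g \<otimes> h \<otimes> inv g \<in> (\<Union>x \<in> Y. \<Union>y \<in> carrier G. {inv y \<otimes> x \<otimes> y})" using x y g by blast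
qed

lemma mem_normal_closure: "Y \<subseteq> carrier G \<Longrightarrow> x \<in> Y \<Longrightarrow> x \<in> normal_closure G Y"
  unfolding normal_closure_def by (rule generate.incl) (use l_one in force)

lemma gcomm_subgroup_normal:
  assumes "N \<lhd> G"
  shows "generate G {gcomm G r f | r f. r \<in> N \<and> f \<in> carrier G} \<lhd> G"
proof (rule normal_generateI)
  interpret N: normal N G by (rule assms)
  show "{gcomm G r f | r f. r \<in> N \<and> f \<in> carrier G} \<subseteq> carrier G" using N.subset by auto
next
  interpret N: normal N G by (rule assms)
  fix h g assume "h \<in> {gcomm G r f | r f. r \<in> N \<and> f \<in> carrier G}" and g: "g \<in> carrier G"
  then obtain r f where r: "r \<in> N" and f: "f \<in> carrier G" and h: "h = gcomm G r f" by blast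
  have "g \<otimes> h \<otimes> inv g = gcomm G (g \<otimes> r \<otimes> inv g) (g \<otimes> f \<otimes> inv g)"
    using gcomm_conj'[of r f g] h r f g N.subset by auto
  moreover have "g \<otimes> r \<otimes> inv g \<in> N" using N.inv_op_closed2[OF g r] .
  ultimately show "g \<otimes> h \<otimes> inv g \<in> {gcomm G r f | r f. r \<in> N \<and> f \<in> carrier G}"
    using g f by blast
qed

lemma rcos_center_Mod:
  assumes K: "K \<lhd> G" and r: "r \<in> carrier G" and comm: "\<And>f. f \<in> carrier G \<Longrightarrow> gcomm G r f \<in> K"
  shows "K #> r \<in> center (G Mod K)"
proof -
  interpret K: normal K G by (rule K)
  interpret h: group_hom G "G Mod K" "\<lambda>x. K #> x"
    unfolding group_hom_def group_hom_axioms_def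
    using is_group K.factorgroup_is_group K.r_coset_hom_Mod by simp
  have "gcomm (G Mod K) (K #> r) (K #> f) = \<one>\<^bsub>G Mod K\<^esub>" if f: "f \<in> carrier G" for f
  proof -
    have "gcomm (G Mod K) (K #> r) (K #> f) = K #> gcomm G r f"
      using r f by (simp add: gcomm_def del: one_FactGroup mult_FactGroup)
    also have "\<dots> = K" using coset_join2[OF gcomm_closed[OF r f] K.subgroup_axioms] comm[OF f] .
    finally show ?thesis by simp
  qed
  then have "(K #> r) \<otimes>\<^bsub>G Mod K\<^esub> y = y \<otimes>\<^bsub>G Mod K\<^esub> (K #> r)" if "y \<in> carrier (G Mod K)" for y
    using that r h.hom_closed group.gcomm_eq_one_iff[OF h.H.is_group]
    by (auto simp: carrier_FactGroup simp del: one_FactGroup mult_FactGroup)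
  then show ?thesis using r h.hom_closed by (simp add: center_def del: mult_FactGroup)
qed

end

lemma relators_subset_carrier: "relators n m1 m2 \<subseteq> carrier (FF n)"
proof -
  interpret group "FF n" by (rule group_FF)
  show ?thesis unfolding relators_def
    by (auto intro!: sg_in_carrier m_closed inv_closed nat_pow_closed gcomm_closed simp: gcomm3_def)
qed

locale presentation =
  fixes n m1 m2 :: nat
  assumes m1_dvd_m2: "m1 dvd m2"
begin

sublocale free: group "FF n"
  by (rule group_FF)

abbreviation Q where "Q \<equiv> FF n Mod RF n m1 m2"

definition proj :: "(nat \<times> bool) fword \<Rightarrow> (nat \<times> bool) fword set" where
  "proj w = RF n m1 m2 #>\<^bsub>FF n\<^esub> w"

lemma RF_normal: "RF n m1 m2 \<lhd> FF n"
  unfolding RF_def RR_def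
  using group.gcomm_subgroup_normal[OF group_FF group.normal_closure_normal[OF group_FF relators_subset_carrier]] .

lemma group_Q: "group Q"
  using normal.factorgroup_is_group[OF RF_normal] .

lemma proj_hom: "group_hom (FF n) Q proj"
  unfolding group_hom_def group_hom_axioms_def proj_def[abs_def]
  using group_FF group_Q normal.r_coset_hom_Mod[OF RF_normal] by simp

lemma proj_relator_central:
  assumes \<rho>: "\<rho> \<in> relators n m1 m2"
  shows "proj \<rho> \<in> center Q"
proof -
  have "\<rho> \<in> RR n m1 m2"
    unfolding RR_def using group.mem_normal_closure[OF group_FF relators_subset_carrier \<rho>] .
  then have "gcomm (FF n) \<rho> f \<in> RF n m1 m2" if "f \<in> carrier (FF n)" for f
    unfolding RF_def using that by (blast intro: generate.incl)
  then show ?thesis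
    unfolding proj_def using group.rcos_center_Mod[OF group_FF RF_normal] \<rho> relators_subset_carrier by blast
qed

lemma proj_closed [simp]: "w \<in> carrier (FF n) \<Longrightarrow> proj w \<in> carrier Q"
  using group_hom.hom_closed[OF proj_hom] .

lemma proj_mult [simp]: "v \<in> carrier (FF n) \<Longrightarrow> w \<in> carrier (FF n) \<Longrightarrow>
    proj (v \<otimes>\<^bsub>FF n\<^esub> w) = proj v \<otimes>\<^bsub>Q\<^esub> proj w"
  using group_hom.hom_mult[OF proj_hom] .

lemma proj_inv [simp]: "w \<in> carrier (FF n) \<Longrightarrow> proj (inv\<^bsub>FF n\<^esub> w) = inv\<^bsub>Q\<^esub> proj w"
  using group_hom.hom_inv[OF proj_hom] .

lemma proj_nat_pow [simp]: "w \<in> carrier (FF n) \<Longrightarrow> proj (w [^]\<^bsub>FF n\<^esub> (k::nat)) = proj w [^]\<^bsub>Q\<^esub> k"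
  using group_hom.hom_nat_pow[OF proj_hom] .

lemma proj_gcomm [simp]: "v \<in> carrier (FF n) \<Longrightarrow> w \<in> carrier (FF n) \<Longrightarrow>
    proj (gcomm (FF n) v w) = gcomm Q (proj v) (proj w)"
  by (simp add: gcomm_def)

lemma qord_dvd:
  assumes "w \<in> carrier (FF n)" "proj w [^]\<^bsub>Q\<^esub> (k::nat) = \<one>\<^bsub>Q\<^esub>"
  shows "qord n m1 m2 w dvd k"
  using group.pow_eq_id[OF group_Q proj_closed[OF assms(1)]] assms(2) by (simp add: qord_def proj_def)

lemma generator_pair_proj:
  assumes "1 \<le> i" "i \<le> n - 1"
  shows "generator_pair Q (proj (s1 i)) (proj (sx i)) m1 m2"
proof -
  have "s1 i [^]\<^bsub>FF n\<^esub> m1 \<otimes>\<^bsub>FF n\<^esub> inv\<^bsub>FF n\<^esub> (sx i [^]\<^bsub>FF n\<^esub> m1) \<in> relators n m1 m2"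
    "sx i [^]\<^bsub>FF n\<^esub> m2 \<in> relators n m1 m2" "gcomm (FF n) (s1 i) (sx i) \<in> relators n m1 m2"
    unfolding relators_def using assms by blast+
  then show ?thesis
    using proj_relator_central assms m1_dvd_m2
    by (intro generator_pair.intro generator_pair_axioms.intro group_Q)
      (fastforce simp: sg_in_carrier)+
qed

lemma distant_pairs_proj:
  assumes "1 \<le> i" "i + 1 < j" "j \<le> n - 1"
  shows "distant_pairs Q (proj (s1 i)) (proj (sx i)) (proj (s1 j)) (proj (sx j)) m1 m2"
proof -
  have rel: "gcomm (FF n) (sg i x) (sg j y) \<in> relators n m1 m2" for x y
    unfolding relators_def using assms by blast
  have "gcomm Q (proj (sg i x)) (proj (sg j y)) \<in> center Q" for x y
    using rel[THEN proj_relator_central] assms by (simp add: sg_in_carrier del: mult_FactGroup)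
  then show ?thesis
    using assms generator_pair_proj[of i] generator_pair_proj[of j]
    by (intro distant_pairs.intro distant_pairs_axioms.intro group_Q) simp_all
qed

lemma adjacent_pairs_proj:
  assumes "1 \<le> i" "i \<le> n - 2"
  shows "adjacent_pairs Q (proj (s1 i)) (proj (sx i)) (proj (s1 (i + 1))) (proj (sx (i + 1))) m1 m2"
proof -
  have rel: "gcomm (FF n) (inv\<^bsub>FF n\<^esub> (sg i x)) (inv\<^bsub>FF n\<^esub> (sx (i + 1))) \<otimes>\<^bsub>FF n\<^esub>
      inv\<^bsub>FF n\<^esub> (gcomm (FF n) (sx i) (s1 (i + 1))) \<in> relators n m1 m2"
    "gcomm (FF n) (gcomm (FF n) (sg i x) (s1 (i + 1))) (s1 i) \<in> relators n m1 m2"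
    "gcomm (FF n) (gcomm (FF n) (sg i x) (s1 (i + 1))) (s1 (i + 1)) \<in> relators n m1 m2" for x
    unfolding relators_def gcomm3_def using assms by blast+
  have
    "gcomm Q (inv\<^bsub>Q\<^esub> (proj (sg i x))) (inv\<^bsub>Q\<^esub> (proj (sx (i + 1)))) \<otimes>\<^bsub>Q\<^esub>
      inv\<^bsub>Q\<^esub> (gcomm Q (proj (sx i)) (proj (s1 (i + 1)))) \<in> center Q"
    "gcomm Q (gcomm Q (proj (sg i x)) (proj (s1 (i + 1)))) (proj (s1 i)) \<in> center Q"
    "gcomm Q (gcomm Q (proj (sg i x)) (proj (s1 (i + 1)))) (proj (s1 (i + 1))) \<in> center Q" for x
    using rel[THEN proj_relator_central] assms by (simp_all add: sg_in_carrier del: mult_FactGroup)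
  then show ?thesis
    using assms generator_pair_proj[of i] generator_pair_proj[of "i + 1"]
    by (intro adjacent_pairs.intro adjacent_pairs_axioms.intro group_Q) simp_all
qed

lemma adjacent_triple_proj:
  assumes "1 \<le> i" "i \<le> n - 3"
  shows "adjacent_triple Q (proj (s1 i)) (proj (sx i)) (proj (s1 (i + 1))) (proj (sx (i + 1)))
    (proj (s1 (i + 2))) (proj (sx (i + 2))) m1 m2"
proof -
  have rel: "gcomm (FF n) (sg i x) (s1 (i + 2)) \<in> relators n m1 m2"
    "gcomm (FF n) (gcomm (FF n) (sg i x) (s1 (i + 1))) (gcomm (FF n) (sg (i + 1) y) (s1 (i + 2)))
      \<in> relators n m1 m2" for x y
  proof -
    have "i + 1 < i + 2" "i + 2 \<le> n - 1" "i \<le> n - 3" using assms by arith+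
    then show "gcomm (FF n) (sg i x) (s1 (i + 2)) \<in> relators n m1 m2"
      "gcomm (FF n) (gcomm (FF n) (sg i x) (s1 (i + 1))) (gcomm (FF n) (sg (i + 1) y) (s1 (i + 2)))
        \<in> relators n m1 m2"
      unfolding relators_def using assms(1) by blast+
  qed
  have "gcomm Q (proj (sg i x)) (proj (s1 (i + 2))) \<in> center Q"
    "gcomm Q (gcomm Q (proj (sg i x)) (proj (s1 (i + 1)))) (gcomm Q (proj (sg (i + 1) y)) (proj (s1 (i + 2))))
      \<in> center Q" for x y
    using rel[THEN proj_relator_central] assms by (simp_all add: sg_in_carrier del: mult_FactGroup)
  moreover have "adjacent_pairs Q (proj (s1 (i + 1))) (proj (sx (i + 1))) (proj (s1 (i + 2)))
      (proj (sx (i + 2))) m1 m2"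
    using adjacent_pairs_proj[of "i + 1"] assms by (simp add: add.assoc)
  ultimately show ?thesis
    using assms adjacent_pairs_proj[of i]
    by (intro adjacent_triple.intro adjacent_triple_axioms.intro group_Q) simp_all
qed

lemma qord_gcomm_s1_sx_dvd:
  assumes "1 \<le> i" "i \<le> n - 1"
  shows "qord n m1 m2 (gcomm (FF n) (s1 i) (sx i)) dvd m1"
  using generator_pair.gcomm_a_b_pow_m1[OF generator_pair_proj[OF assms]] assms
  by (intro qord_dvd) (simp_all add: sg_in_carrier del: one_FactGroup mult_FactGroup)

lemma qord_distant_gcomms_dvd:
  assumes "1 \<le> i" "i + 1 < j" "j \<le> n - 1"
  shows "qord n m1 m2 (gcomm (FF n) (s1 i) (s1 j)) dvd m2
    \<and> qord n m1 m2 (gcomm (FF n) (sx i) (sx j) \<otimes>\<^bsub>FF n\<^esub> inv\<^bsub>FF n\<^esub> (gcomm (FF n) (s1 i) (s1 j))) dvd m1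
    \<and> qord n m1 m2 (gcomm (FF n) (sx i) (s1 j) \<otimes>\<^bsub>FF n\<^esub> inv\<^bsub>FF n\<^esub> (gcomm (FF n) (sx i) (sx j))) dvd m1
    \<and> qord n m1 m2 (gcomm (FF n) (s1 i) (sx j) \<otimes>\<^bsub>FF n\<^esub> inv\<^bsub>FF n\<^esub> (gcomm (FF n) (sx i) (sx j))) dvd m1"
proof -
  interpret D: distant_pairs Q "proj (s1 i)" "proj (sx i)" "proj (s1 j)" "proj (sx j)" m1 m2
    by (rule distant_pairs_proj[OF assms])
  have "i \<le> n - 1" "1 \<le> j" using assms by arith+
  then show ?thesis
    using D.gcomm_a_c_pow_m2 D.gcomm_b_d_quotient_pow_m1 D.gcomm_b_c_quotient_pow_m1
      D.gcomm_a_d_quotient_pow_m1 assms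
    by (intro conjI qord_dvd) (simp_all add: sg_in_carrier del: one_FactGroup mult_FactGroup)
qed

lemma qord_adjacent_gcomms_dvd:
  assumes "1 \<le> i" "i \<le> n - 2"
  shows "qord n m1 m2 (gcomm (FF n) (s1 i) (sx (i + 1)) \<otimes>\<^bsub>FF n\<^esub> inv\<^bsub>FF n\<^esub> (gcomm (FF n) (sx i) (s1 (i + 1))))
      dvd m1
    \<and> qord n m1 m2 (gcomm (FF n) (sx i) (sx (i + 1)) \<otimes>\<^bsub>FF n\<^esub> inv\<^bsub>FF n\<^esub> (gcomm (FF n) (sx i) (s1 (i + 1))))
      dvd m1"
proof -
  interpret A: adjacent_pairs Q "proj (s1 i)" "proj (sx i)" "proj (s1 (i + 1))" "proj (sx (i + 1))" m1 m2
    by (rule adjacent_pairs_proj[OF assms])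
  have "i \<le> n - 1" "i + 1 \<le> n - 1" using assms by arith+
  then show ?thesis
    using A.gcomm_a_b1_quotient_pow_m1 A.gcomm_b_b1_quotient_pow_m1 assms
    by (intro conjI qord_dvd) (simp_all add: sg_in_carrier del: one_FactGroup mult_FactGroup)
qed

lemma qord_adjacent_gcomm3s_dvd:
  assumes "1 \<le> i" "i \<le> n - 2"
  shows "qord n m1 m2 (gcomm3 (FF n) (s1 i) (s1 (i + 1)) (s1 i)) dvd m2
    \<and> qord n m1 m2 (gcomm3 (FF n) (s1 i) (s1 (i + 1)) (s1 (i + 1) \<otimes>\<^bsub>FF n\<^esub> inv\<^bsub>FF n\<^esub> (s1 i)))
      dvd gcd m2 (m2 choose 2)
    \<and> qord n m1 m2 (gcomm3 (FF n) (s1 i) (s1 (i + 1)) (sx i \<otimes>\<^bsub>FF n\<^esub> inv\<^bsub>FF n\<^esub> (s1 i))) dvd m1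
    \<and> qord n m1 m2 (gcomm3 (FF n) (s1 i) (s1 (i + 1))
        (sx i \<otimes>\<^bsub>FF n\<^esub> inv\<^bsub>FF n\<^esub> (sx (i + 1)) \<otimes>\<^bsub>FF n\<^esub>
         inv\<^bsub>FF n\<^esub> (s1 i \<otimes>\<^bsub>FF n\<^esub> inv\<^bsub>FF n\<^esub> (s1 (i + 1)))))
      dvd gcd m1 (m1 choose 2)"
proof -
  interpret A: adjacent_pairs Q "proj (s1 i)" "proj (sx i)" "proj (s1 (i + 1))" "proj (sx (i + 1))" m1 m2
    by (rule adjacent_pairs_proj[OF assms])
  have "i \<le> n - 1" "i + 1 \<le> n - 1" using assms by arith+
  then show ?thesis
    using A.gcomm3_a_a1_a_pow_m2 A.gcomm3_a_a1_a1_inv_a_pow A.gcomm3_a_a1_b_inv_a_pow_m1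
      A.gcomm3_a_a1_b_inv_b1_pow assms
    by (intro conjI qord_dvd) (simp_all add: sg_in_carrier gcomm3_def del: one_FactGroup mult_FactGroup)
qed

lemma qord_gcomm4s_dvd:
  assumes "1 \<le> i" "i \<le> n - 3"
  shows "qord n m1 m2 (gcomm4 (FF n) (s1 i) (s1 (i + 1)) (s1 (i + 2)) (s1 (i + 1))) dvd gcd 2 m2
    \<and> qord n m1 m2 (gcomm4 (FF n) (s1 i) (s1 (i + 1)) (s1 (i + 2))
        (sx (i + 1) \<otimes>\<^bsub>FF n\<^esub> inv\<^bsub>FF n\<^esub> (s1 (i + 1)))) dvd gcd 2 m1"
proof -
  interpret T: adjacent_triple Q "proj (s1 i)" "proj (sx i)" "proj (s1 (i + 1))" "proj (sx (i + 1))"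
      "proj (s1 (i + 2))" "proj (sx (i + 2))" m1 m2
    by (rule adjacent_triple_proj[OF assms])
  have "i \<le> n - 1" "i + 1 \<le> n - 1" "i + 2 \<le> n - 1" using assms by arith+
  then show ?thesis
    using T.gcomm4_a_a1_a2_a1_pow T.gcomm4_a_a1_a2_b1_inv_a1_pow assms
    by (intro conjI qord_dvd) (simp_all add: sg_in_carrier gcomm4_def gcomm3_def del: one_FactGroup mult_FactGroup)
qed

end

theorem mainTheorem8:
  fixes n m1 m2 :: nat
  assumes "n \<ge> 3" and "0 < m1" and "0 < m2" and "m1 dvd m2"
  defines "F \<equiv> FF n" and "q \<equiv> qord n m1 m2"
  shows
    "(\<forall>i. 1 \<le> i \<and> i \<le> n - 1 \<longrightarrow>
        q (gcomm F (s1 i) (sx i)) dvd m1)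
   \<and> (\<forall>i j. 1 \<le> i \<and> i + 1 < j \<and> j \<le> n - 1 \<longrightarrow>
        q (gcomm F (s1 i) (s1 j)) dvd m2
      \<and> q (gcomm F (sx i) (sx j) \<otimes>\<^bsub>F\<^esub> inv\<^bsub>F\<^esub> (gcomm F (s1 i) (s1 j))) dvd m1
      \<and> q (gcomm F (sx i) (s1 j) \<otimes>\<^bsub>F\<^esub> inv\<^bsub>F\<^esub> (gcomm F (sx i) (sx j))) dvd m1
      \<and> q (gcomm F (s1 i) (sx j) \<otimes>\<^bsub>F\<^esub> inv\<^bsub>F\<^esub> (gcomm F (sx i) (sx j))) dvd m1)
   \<and> (\<forall>i. 1 \<le> i \<and> i \<le> n - 2 \<longrightarrow>
        q (gcomm F (s1 i) (sx (i+1)) \<otimes>\<^bsub>F\<^esub> inv\<^bsub>F\<^esub> (gcomm F (sx i) (s1 (i+1)))) dvd m1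
      \<and> q (gcomm F (sx i) (sx (i+1)) \<otimes>\<^bsub>F\<^esub> inv\<^bsub>F\<^esub> (gcomm F (sx i) (s1 (i+1)))) dvd m1)
   \<and> (\<forall>i. 1 \<le> i \<and> i \<le> n - 2 \<longrightarrow>
        q (gcomm3 F (s1 i) (s1 (i+1)) (s1 i)) dvd m2
      \<and> q (gcomm3 F (s1 i) (s1 (i+1)) (s1 (i+1) \<otimes>\<^bsub>F\<^esub> inv\<^bsub>F\<^esub> (s1 i)))
          dvd gcd m2 (m2 choose 2)
      \<and> q (gcomm3 F (s1 i) (s1 (i+1)) (sx i \<otimes>\<^bsub>F\<^esub> inv\<^bsub>F\<^esub> (s1 i))) dvd m1
      \<and> q (gcomm3 F (s1 i) (s1 (i+1))
            (sx i \<otimes>\<^bsub>F\<^esub> inv\<^bsub>F\<^esub> (sx (i+1)) \<otimes>\<^bsub>F\<^esub>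
             inv\<^bsub>F\<^esub> (s1 i \<otimes>\<^bsub>F\<^esub> inv\<^bsub>F\<^esub> (s1 (i+1)))))
          dvd gcd m1 (m1 choose 2))
   \<and> (\<forall>i. 1 \<le> i \<and> i \<le> n - 3 \<longrightarrow>
        q (gcomm4 F (s1 i) (s1 (i+1)) (s1 (i+2)) (s1 (i+1))) dvd gcd 2 m2
      \<and> q (gcomm4 F (s1 i) (s1 (i+1)) (s1 (i+2)) (sx (i+1) \<otimes>\<^bsub>F\<^esub> inv\<^bsub>F\<^esub> (s1 (i+1))))
          dvd gcd 2 m1)"
proof -
  interpret presentation n m1 m2 by unfold_locales (rule assms(4))
  show ?thesis
    unfolding F_def q_def
    using qord_gcomm_s1_sx_dvd qord_distant_gcomms_dvd qord_adjacent_gcomms_dvd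
      qord_adjacent_gcomm3s_dvd qord_gcomm4s_dvd
    by blast
qed

end
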